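(* For every $\varepsilon>0$ and integer $k\ge2$ there exist $\delta,\eta>0$ such that for all $n>1/\eta$ and all $\mu\in\mathcal P(\Omega^n)$ the following holds. If for any two $(\delta,k)$-states $S_1,S_2$ of $\mu$ with $\mu(S_1),\mu(S_2)\ge\eta$ we have $\frac1n\sum_{x\in[n]}\|\mu_{\downarrow x}[\cdot|S_1]-\mu_{\downarrow x}[\cdot|S_2]\|_{TV}<\delta$, then $\mu$ is $(\varepsilon,k)$-symmetric.
   Context: $\Omega$ is a fixed finite nonempty set, $\mathcal P(\mathcal X)$ the set of probability measures on a finite set $\mathcal X$, $\|\cdot\|_{TV}$ total variation. For $\mu\in\mathcal P(\Omega^n)$ and $S\subset\Omega^n$ with $\mu(S)>0$, $\mu[\cdot|S]$ is the conditional measure; for $x_1,\dots,x_k\in[n]$, $\mu_{\downarrow\{x_1,\dots,x_k\}}[\cdot|S]$ denotes the joint law of $(\boldsymbol\sigma(x_1),\dots,\boldsymbol\sigma(x_k))$ for $\boldsymbol\sigma\sim\mu[\cdot|S]$ and $\mu_{\downarrow x}[\cdot|S]$ the law of $\boldsymbol\sigma(x)$. A set $S\subset\Omega^n$ is an $(\varepsilon,k)$-state of $\mu$ if $\mu(S)>0$ and $\frac1{n^k}\sum_{x_1,\dots,x_k\in[n]}\|\mu_{\downarrow\{x_1,\dots,x_k\}}[\cdot|S]-\mu_{\downarrow x_1}[\cdot|S]\otimes\cdots\otimes\mu_{\downarrow x_k}[\cdot|S]\|_{TV}<\varepsilon$. The measure $\mu$ is $(\varepsilon,k)$-symmetric if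 $\Omega^n$ itself is an $(\varepsilon,k)$-state of $\mu$. *)

theory Defs
  imports Complex_Main "HOL-Library.FuncSet"
begin

text \<open>Omega is modelled as a finite type 'a (nonempty automatically).
  Configurations in Omega^n are extensional functions {..<n} -> 'a
  (positions 0..n-1 stand for [n]).\<close>

definition cube :: "nat \<Rightarrow> (nat \<Rightarrow> 'a::finite) set" where
  "cube n = PiE {..<n} (\<lambda>_. UNIV)"

definition is_prob :: "nat \<Rightarrow> ((nat \<Rightarrow> 'a::finite) \<Rightarrow> real) \<Rightarrow> bool" where
  "is_prob n \<mu> \<longleftrightarrow> (\<forall>\<sigma>\<in>cube n. \<mu> \<sigma> \<ge> 0) \<and> sum \<mu> (cube n) = 1"

definition msr :: "((nat \<Rightarrow> 'a) \<Rightarrow> real) \<Rightarrow> (nat \<Rightarrow> 'a) set \<Rightarrow> real" where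
  "msr \<mu> S = sum \<mu> S"

definition marg :: "((nat \<Rightarrow> 'a) \<Rightarrow> real) \<Rightarrow> (nat \<Rightarrow> 'a) set \<Rightarrow> nat list \<Rightarrow> 'a list \<Rightarrow> real" where
  "marg \<mu> S xs \<tau> = (\<Sum>\<sigma>\<in>S. if map \<sigma> xs = \<tau> then \<mu> \<sigma> else 0) / msr \<mu> S"

definition marg1 :: "((nat \<Rightarrow> 'a) \<Rightarrow> real) \<Rightarrow> (nat \<Rightarrow> 'a) set \<Rightarrow> nat \<Rightarrow> 'a \<Rightarrow> real" where
  "marg1 \<mu> S x a = (\<Sum>\<sigma>\<in>S. if \<sigma> x = a then \<mu> \<sigma> else 0) / msr \<mu> S"

definition prod_marg :: "((nat \<Rightarrow> 'a) \<Rightarrow> real) \<Rightarrow> (nat \<Rightarrow> 'a) set \<Rightarrow> nat list \<Rightarrow> 'a list \<Rightarrow> real" where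
  "prod_marg \<mu> S xs \<tau> = (\<Prod>i<length xs. marg1 \<mu> S (xs ! i) (\<tau> ! i))"

text \<open>Total variation distance (= max_A |P(A)-Q(A)| = half the L1 distance).\<close>
definition tv_list :: "nat \<Rightarrow> ('a::finite list \<Rightarrow> real) \<Rightarrow> ('a list \<Rightarrow> real) \<Rightarrow> real" where
  "tv_list k p q = (\<Sum>\<tau>\<in>{\<tau>::'a list. length \<tau> = k}. \<bar>p \<tau> - q \<tau>\<bar>) / 2"

definition tv1 :: "('a::finite \<Rightarrow> real) \<Rightarrow> ('a \<Rightarrow> real) \<Rightarrow> real" where
  "tv1 p q = (\<Sum>a\<in>UNIV. \<bar>p a - q a\<bar>) / 2"

definition tuples :: "nat \<Rightarrow> nat \<Rightarrow> nat list set" where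
  "tuples n k = {xs. length xs = k \<and> set xs \<subseteq> {..<n}}"

definition is_state :: "nat \<Rightarrow> ((nat \<Rightarrow> 'a::finite) \<Rightarrow> real) \<Rightarrow> real \<Rightarrow> nat \<Rightarrow> (nat \<Rightarrow> 'a) set \<Rightarrow> bool" where
  "is_state n \<mu> \<epsilon> k S \<longleftrightarrow> S \<subseteq> cube n \<and> msr \<mu> S > 0 \<and>
     (1 / real n ^ k) * (\<Sum>xs\<in>tuples n k. tv_list k (marg \<mu> S xs) (prod_marg \<mu> S xs)) < \<epsilon>"

definition is_symmetric :: "nat \<Rightarrow> ((nat \<Rightarrow> 'a::finite) \<Rightarrow> real) \<Rightarrow> real \<Rightarrow> nat \<Rightarrow> bool" where
  "is_symmetric n \<mu> \<epsilon> k \<longleftrightarrow> is_state n \<mu> \<epsilon> k (cube n)"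

end

theory Submission
  imports Defs
begin

text \<open>
  A telescoping argument bounds the k-wise correlation of \<mu> on a set S by the averaged defects
  of splitting off one site from j < k others, and by AM-GM each such defect is controlled by the
  increase of an energy (the mass-weighted squared norm of the joint laws) when that site is
  pinned. The energy averaged over t random pinned sites is nondecreasing in t and bounded by k,
  so for some t < T the cells obtained by pinning t random sites are on average almost
  (\<delta>,k)-states. Writing \<mu> as the mixture of these cells, its correlation is at most the average
  correlation of the cells plus k times the average one-site distance between two random cells.
  Heavy cells that are states are pairwise close by hypothesis, and the remaining cells carry
  little weight.
\<close>

definition lists_of_len :: "'a set \<Rightarrow> nat \<Rightarrow> 'a list set" where
  "lists_of_len A j = {xs. set xs \<subseteq> A \<and> length xs = j}"

abbreviation words :: "nat \<Rightarrow> 'a list set" where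
  "words j \<equiv> lists_of_len UNIV j"

lemma finite_lists_of_len[simp]: "finite A \<Longrightarrow> finite (lists_of_len A j)"
  unfolding lists_of_len_def by (rule finite_lists_length_eq)

lemma card_lists_of_len: "finite A \<Longrightarrow> card (lists_of_len A j) = card A ^ j"
  unfolding lists_of_len_def by (rule card_lists_length_eq)

lemma lists_of_len_0: "lists_of_len A 0 = {[]}"
  by (auto simp: lists_of_len_def)

lemma sum_lists_of_len_Suc:
  "(\<Sum>xs\<in>lists_of_len A (Suc j). f xs) = (\<Sum>b\<in>A. \<Sum>xs\<in>lists_of_len A j. f (b # xs))"
proof -
  have img: "lists_of_len A (Suc j) = (\<lambda>(b, xs). b # xs) ` (A \<times> lists_of_len A j)"
    by (auto simp: lists_of_len_def image_iff length_Suc_conv)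
  have "inj_on (\<lambda>(b, xs). b # xs) (A \<times> lists_of_len A j)"
    by (auto simp: inj_on_def)
  then show ?thesis
    unfolding img by (simp add: sum.reindex sum.cartesian_product split_def)
qed

lemma words_eq: "words j = {\<tau>. length \<tau> = j}"
  by (simp add: lists_of_len_def)

lemma tuples_eq_lists_of_len: "tuples n j = lists_of_len {..<n} j"
  by (auto simp: tuples_def lists_of_len_def)

lemma finite_tuples[simp]: "finite (tuples n j)"
  by (simp add: tuples_eq_lists_of_len)

lemma card_tuples: "card (tuples n j) = n ^ j"
  by (simp add: tuples_eq_lists_of_len card_lists_of_len)

lemma tuples_0: "tuples n 0 = {[]}"
  by (simp add: tuples_eq_lists_of_len lists_of_len_0)

lemma sum_tuples_Suc: "(\<Sum>xs\<in>tuples n (Suc j). f xs) = (\<Sum>y<n. \<Sum>xs\<in>tuples n j. f (y # xs))"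
  unfolding tuples_eq_lists_of_len by (rule sum_lists_of_len_Suc)

lemma tv_list_words: "tv_list j p q = (\<Sum>\<tau>\<in>words j. \<bar>p \<tau> - q \<tau>\<bar>) / 2"
  unfolding tv_list_def words_eq ..

lemma tv_list_Suc: "tv_list (Suc j) p q = (\<Sum>b\<in>UNIV. \<Sum>\<rho>\<in>words j. \<bar>p (b#\<rho>) - q (b#\<rho>)\<bar>) / 2"
  unfolding tv_list_words sum_lists_of_len_Suc ..

definition pattern_mass :: "((nat \<Rightarrow> 'a) \<Rightarrow> real) \<Rightarrow> (nat \<Rightarrow> 'a) set \<Rightarrow> nat list \<Rightarrow> 'a list \<Rightarrow> real" where
  "pattern_mass \<mu> S xs \<rho> = (\<Sum>\<sigma>\<in>S. if map \<sigma> xs = \<rho> then \<mu> \<sigma> else 0)"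

definition nonneg_fin :: "((nat \<Rightarrow> 'a) \<Rightarrow> real) \<Rightarrow> (nat \<Rightarrow> 'a) set \<Rightarrow> bool" where
  "nonneg_fin \<mu> S \<longleftrightarrow> finite S \<and> (\<forall>\<sigma>\<in>S. 0 \<le> \<mu> \<sigma>)"

lemma nonneg_fin_subset: "nonneg_fin \<mu> S \<Longrightarrow> T \<subseteq> S \<Longrightarrow> nonneg_fin \<mu> T"
  unfolding nonneg_fin_def by (auto intro: finite_subset)

lemma marg_eq_pattern_mass: "marg \<mu> S xs \<rho> = pattern_mass \<mu> S xs \<rho> / msr \<mu> S"
  by (simp add: marg_def pattern_mass_def)

lemma marg1_marg: "marg1 \<mu> S x a = marg \<mu> S [x] [a]"
  by (simp add: marg1_def marg_def)

lemma msr_nonneg: "nonneg_fin \<mu> S \<Longrightarrow> 0 \<le> msr \<mu> S"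
  unfolding nonneg_fin_def msr_def by (auto intro: sum_nonneg)

lemma pattern_mass_nonneg: "nonneg_fin \<mu> S \<Longrightarrow> 0 \<le> pattern_mass \<mu> S xs \<rho>"
  unfolding nonneg_fin_def pattern_mass_def by (auto intro: sum_nonneg)

lemma pattern_mass_le_msr: "nonneg_fin \<mu> S \<Longrightarrow> pattern_mass \<mu> S xs \<rho> \<le> msr \<mu> S"
  unfolding nonneg_fin_def pattern_mass_def msr_def by (auto intro: sum_mono)

lemma sum_pattern_mass:
  assumes "nonneg_fin \<mu> S"
  shows "(\<Sum>\<rho>\<in>words (length xs). pattern_mass \<mu> S xs \<rho>) = msr \<mu> (S :: (nat \<Rightarrow> 'a::finite) set)"
proof -
  have "(\<Sum>\<rho>\<in>words (length xs). pattern_mass \<mu> S xs \<rho>)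
      = (\<Sum>\<sigma>\<in>S. \<Sum>\<rho>\<in>words (length xs). if map \<sigma> xs = \<rho> then \<mu> \<sigma> else 0)"
    unfolding pattern_mass_def by (rule sum.swap)
  also have "\<dots> = (\<Sum>\<sigma>\<in>S. \<mu> \<sigma>)"
  proof (rule sum.cong)
    fix \<sigma> assume "\<sigma> \<in> S"
    have "map \<sigma> xs \<in> words (length xs)" by (simp add: lists_of_len_def)
    then show "(\<Sum>\<rho>\<in>words (length xs). if map \<sigma> xs = \<rho> then \<mu> \<sigma> else 0) = \<mu> \<sigma>"
      by (simp add: sum.delta)
  qed simp
  finally show ?thesis by (simp add: msr_def)
qed

lemma sum_split_by_site:
  assumes "finite S"
  shows "(\<Sum>b\<in>(UNIV::'a::finite set). \<Sum>\<sigma>\<in>{\<sigma>\<in>S. \<sigma> y = b}. g \<sigma>) = (\<Sum>\<sigma>\<in>S. g \<sigma>)"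
proof -
  have "(\<Sum>b\<in>(UNIV::'a set). \<Sum>\<sigma>\<in>{\<sigma>\<in>S. \<sigma> y = b}. g \<sigma>)
      = (\<Sum>b\<in>(UNIV::'a set). \<Sum>\<sigma>\<in>S. if \<sigma> y = b then g \<sigma> else 0)"
    using assms by (simp add: sum.inter_filter)
  also have "\<dots> = (\<Sum>\<sigma>\<in>S. \<Sum>b\<in>(UNIV::'a set). if \<sigma> y = b then g \<sigma> else 0)"
    by (rule sum.swap)
  also have "\<dots> = (\<Sum>\<sigma>\<in>S. g \<sigma>)" by simp
  finally show ?thesis .
qed

lemma pattern_mass_Cons:
  assumes "finite S"
  shows "pattern_mass \<mu> S (y#xs) (b#\<rho>) = pattern_mass \<mu> {\<sigma>\<in>S. \<sigma> y = b} xs \<rho>"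
proof -
  have "pattern_mass \<mu> S (y#xs) (b#\<rho>)
      = (\<Sum>\<sigma>\<in>S. if \<sigma> y = b then (if map \<sigma> xs = \<rho> then \<mu> \<sigma> else 0) else 0)"
    unfolding pattern_mass_def by (rule sum.cong) auto
  also have "\<dots> = pattern_mass \<mu> {\<sigma>\<in>S. \<sigma> y = b} xs \<rho>"
    unfolding pattern_mass_def using assms by (rule sum.inter_filter[symmetric])
  finally show ?thesis .
qed

lemma sum_msr_split_by_site:
  assumes "finite S"
  shows "(\<Sum>b\<in>(UNIV::'a::finite set). msr \<mu> {\<sigma>\<in>S. \<sigma> y = b}) = msr \<mu> S"
  unfolding msr_def by (rule sum_split_by_site[OF assms])

lemma sum_pattern_mass_split_by_site:
  assumes "finite S"
  shows "(\<Sum>b\<in>(UNIV::'a::finite set). pattern_mass \<mu> {\<sigma>\<in>S. \<sigma> y = b} xs \<rho>) = pattern_mass \<mu> S xs \<rho>"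
  unfolding pattern_mass_def by (rule sum_split_by_site[OF assms])

lemma marg_nonneg: "nonneg_fin \<mu> S \<Longrightarrow> 0 \<le> marg \<mu> S xs \<rho>"
  by (simp add: marg_eq_pattern_mass pattern_mass_nonneg msr_nonneg)

lemma sum_marg:
  assumes "nonneg_fin \<mu> S" "msr \<mu> S > 0"
  shows "(\<Sum>\<rho>\<in>words (length xs). marg \<mu> (S :: (nat \<Rightarrow> 'a::finite) set) xs \<rho>) = 1"
  using assms by (simp add: marg_eq_pattern_mass sum_divide_distrib[symmetric] sum_pattern_mass)

lemma marg1_nonneg: "nonneg_fin \<mu> S \<Longrightarrow> 0 \<le> marg1 \<mu> S x a"
  by (simp add: marg1_marg marg_nonneg)

lemma sum_marg1:
  assumes "nonneg_fin \<mu> S" "msr \<mu> S > 0"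
  shows "(\<Sum>a\<in>UNIV. marg1 \<mu> (S :: (nat \<Rightarrow> 'a::finite) set) x a) = 1"
proof -
  have "(\<Sum>\<rho>\<in>words (length [x]). marg \<mu> S [x] \<rho>) = 1" by (rule sum_marg[OF assms])
  then show ?thesis by (simp add: sum_lists_of_len_Suc lists_of_len_0 marg1_marg)
qed

lemma prod_marg_Nil[simp]: "prod_marg \<mu> S [] \<rho> = 1"
  by (simp add: prod_marg_def)

lemma prod_marg_Cons: "prod_marg \<mu> S (y#xs) (b#\<rho>) = marg1 \<mu> S y b * prod_marg \<mu> S xs \<rho>"
  unfolding prod_marg_def by (simp only: length_Cons prod.lessThan_Suc_shift) simp

lemma prod_marg_nonneg: "nonneg_fin \<mu> S \<Longrightarrow> 0 \<le> prod_marg \<mu> S xs \<rho>"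
  unfolding prod_marg_def by (auto intro: prod_nonneg marg1_nonneg)

lemma sum_prod_marg:
  assumes "nonneg_fin \<mu> S" "msr \<mu> S > 0"
  shows "(\<Sum>\<rho>\<in>words (length xs). prod_marg \<mu> (S :: (nat \<Rightarrow> 'a::finite) set) xs \<rho>) = 1"
proof (induction xs)
  case Nil
  then show ?case by (simp add: lists_of_len_0)
next
  case (Cons y xs)
  have "(\<Sum>\<rho>\<in>words (length (y#xs)). prod_marg \<mu> S (y#xs) \<rho>)
      = (\<Sum>b\<in>UNIV. marg1 \<mu> S y b * (\<Sum>\<rho>\<in>words (length xs). prod_marg \<mu> S xs \<rho>))"
    by (simp add: sum_lists_of_len_Suc prod_marg_Cons sum_distrib_left)
  also have "\<dots> = 1" using Cons sum_marg1[OF assms] by simp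
  finally show ?case .
qed

lemma marg_Nil:
  assumes "msr \<mu> S > 0"
  shows "marg \<mu> S [] [] = 1"
  using assms by (simp add: marg_def msr_def)

lemma tv_list_triangle: "tv_list j p r \<le> tv_list j p q + tv_list j q (r :: 'a::finite list \<Rightarrow> real)"
proof -
  have "(\<Sum>\<tau>\<in>words j. \<bar>p \<tau> - r \<tau>\<bar>) \<le> (\<Sum>\<tau>\<in>words j. \<bar>p \<tau> - q \<tau>\<bar> + \<bar>q \<tau> - r \<tau>\<bar>)"
    by (rule sum_mono) linarith
  then show ?thesis by (simp add: tv_list_words sum.distrib add_divide_distrib[symmetric]
      divide_right_mono)
qed

lemma tv_list_nonneg: "0 \<le> tv_list j p q"
  unfolding tv_list_def by (auto intro: sum_nonneg)

lemma tv_list_Cons_product_le: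
  fixes a c :: "'a::finite \<Rightarrow> real"
  assumes a0: "\<And>b. 0 \<le> a b" and a1: "(\<Sum>b\<in>UNIV. a b) = 1"
    and g0: "\<And>\<rho>. 0 \<le> g \<rho>" and g1: "(\<Sum>\<rho>\<in>words l. g \<rho>) = 1"
    and F: "\<And>b \<rho>. F (b#\<rho>) = a b * f \<rho>" and G: "\<And>b \<rho>. G (b#\<rho>) = c b * g \<rho>"
  shows "tv_list (Suc l) F G \<le> tv1 a c + tv_list l f g"
proof -
  have "(\<Sum>b\<in>UNIV. \<Sum>\<rho>\<in>words l. \<bar>F (b#\<rho>) - G (b#\<rho>)\<bar>)
      \<le> (\<Sum>b\<in>UNIV. \<Sum>\<rho>\<in>words l. a b * \<bar>f \<rho> - g \<rho>\<bar> + \<bar>a b - c b\<bar> * g \<rho>)"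
  proof (intro sum_mono)
    fix b \<rho>
    have "F (b#\<rho>) - G (b#\<rho>) = a b * (f \<rho> - g \<rho>) + (a b - c b) * g \<rho>"
      by (simp add: F G algebra_simps)
    also have "\<bar>\<dots>\<bar> \<le> \<bar>a b * (f \<rho> - g \<rho>)\<bar> + \<bar>(a b - c b) * g \<rho>\<bar>" by (rule abs_triangle_ineq)
    also have "\<dots> = a b * \<bar>f \<rho> - g \<rho>\<bar> + \<bar>a b - c b\<bar> * g \<rho>"
      using a0[of b] g0[of \<rho>] by (simp add: abs_mult)
    finally show "\<bar>F (b#\<rho>) - G (b#\<rho>)\<bar> \<le> a b * \<bar>f \<rho> - g \<rho>\<bar> + \<bar>a b - c b\<bar> * g \<rho>" .
  qed
  also have "\<dots> = (\<Sum>b\<in>UNIV. a b * (\<Sum>\<rho>\<in>words l. \<bar>f \<rho> - g \<rho>\<bar>))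
      + (\<Sum>b\<in>UNIV. \<bar>a b - c b\<bar> * (\<Sum>\<rho>\<in>words l. g \<rho>))"
    by (simp add: sum.distrib sum_distrib_left)
  also have "\<dots> = (\<Sum>b\<in>UNIV. a b) * (\<Sum>\<rho>\<in>words l. \<bar>f \<rho> - g \<rho>\<bar>)
      + (\<Sum>b\<in>UNIV. \<bar>a b - c b\<bar>) * (\<Sum>\<rho>\<in>words l. g \<rho>)"
    by (simp add: sum_distrib_right)
  also have "\<dots> = (\<Sum>\<rho>\<in>words l. \<bar>f \<rho> - g \<rho>\<bar>) + (\<Sum>b\<in>UNIV. \<bar>a b - c b\<bar>)"
    using a1 g1 by simp
  finally show ?thesis
    unfolding tv_list_Suc[of l F G] tv_list_words[of l f g] tv1_def by linarith
qed

definition split_defect ::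
  "((nat \<Rightarrow> 'a) \<Rightarrow> real) \<Rightarrow> (nat \<Rightarrow> 'a::finite) set \<Rightarrow> nat \<Rightarrow> nat list \<Rightarrow> real" where
  "split_defect \<mu> S y xs
      = tv_list (Suc (length xs)) (marg \<mu> S (y#xs)) (\<lambda>\<tau>. marg1 \<mu> S y (hd \<tau>) * marg \<mu> S xs (tl \<tau>))"

lemma tv_marg_prod_marg_Cons_le:
  assumes "nonneg_fin \<mu> S" "msr \<mu> S > 0"
  shows "tv_list (Suc (length xs)) (marg \<mu> S (y#xs)) (prod_marg \<mu> S (y#xs))
     \<le> split_defect \<mu> (S :: (nat \<Rightarrow> 'a::finite) set) y xs
         + tv_list (length xs) (marg \<mu> S xs) (prod_marg \<mu> S xs)"
proof -
  have "tv_list (Suc (length xs)) (\<lambda>\<tau>. marg1 \<mu> S y (hd \<tau>) * marg \<mu> S xs (tl \<tau>))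
      (prod_marg \<mu> S (y#xs))
     \<le> tv1 (marg1 \<mu> S y) (marg1 \<mu> S y) + tv_list (length xs) (marg \<mu> S xs) (prod_marg \<mu> S xs)"
    by (rule tv_list_Cons_product_le)
        (auto simp: marg1_nonneg[OF assms(1)] sum_marg1[OF assms] prod_marg_nonneg[OF assms(1)]
          sum_prod_marg[OF assms] prod_marg_Cons)
  also have "tv1 (marg1 \<mu> S y) (marg1 \<mu> S y) = 0" by (simp add: tv1_def)
  finally show ?thesis
    using tv_list_triangle[of "Suc (length xs)" "marg \<mu> S (y#xs)" "prod_marg \<mu> S (y#xs)"
        "\<lambda>\<tau>. marg1 \<mu> S y (hd \<tau>) * marg \<mu> S xs (tl \<tau>)"]
    unfolding split_defect_def by simp
qed

definition sym_defect :: "nat \<Rightarrow> ((nat \<Rightarrow> 'a::finite) \<Rightarrow> real) \<Rightarrow> nat \<Rightarrow> (nat \<Rightarrow> 'a) set \<Rightarrow> real" where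
  "sym_defect n \<mu> k S = (1 / real n ^ k)
      * (\<Sum>xs\<in>tuples n k. tv_list k (marg \<mu> S xs) (prod_marg \<mu> S xs))"

lemma sym_defect_nonneg: "0 \<le> sym_defect n \<mu> k S"
  unfolding sym_defect_def by (intro mult_nonneg_nonneg sum_nonneg tv_list_nonneg) auto

definition avg_split_defect ::
  "nat \<Rightarrow> ((nat \<Rightarrow> 'a::finite) \<Rightarrow> real) \<Rightarrow> nat \<Rightarrow> (nat \<Rightarrow> 'a) set \<Rightarrow> real" where
  "avg_split_defect n \<mu> j S = (1 / real n ^ Suc j) * (\<Sum>y<n. \<Sum>xs\<in>tuples n j. split_defect \<mu> S y xs)"

lemma is_state_iff_sym_defect: "is_state n \<mu> \<delta> k S \<longleftrightarrow> S \<subseteq> cube n \<and> msr \<mu> S > 0 \<and> sym_defect n \<mu> k S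
    < \<delta>"
  by (simp add: is_state_def sym_defect_def)

lemma sym_defect_le_sum_avg_split_defect:
  assumes "nonneg_fin \<mu> S" "msr \<mu> S > 0" "n > 0"
  shows "sym_defect n \<mu> k S \<le> (\<Sum>j<k. avg_split_defect n \<mu> j S)"
proof (induction k)
  case 0
  then show ?case using assms by (simp add: sym_defect_def tuples_0 tv_list_def marg_Nil)
next
  case (Suc k)
  have "(\<Sum>xs\<in>tuples n (Suc k). tv_list (Suc k) (marg \<mu> S xs) (prod_marg \<mu> S xs))
      = (\<Sum>y<n. \<Sum>xs\<in>tuples n k. tv_list (Suc (length xs)) (marg \<mu> S (y#xs)) (prod_marg \<mu> S (y#xs)))"
    unfolding sum_tuples_Suc by (intro sum.cong refl) (auto simp: tuples_def)
  also have "\<dots> \<le>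
      (\<Sum>y<n. \<Sum>xs\<in>tuples n k. split_defect \<mu> S y xs
      + tv_list (length xs) (marg \<mu> S xs) (prod_marg \<mu> S xs))"
    by (intro sum_mono tv_marg_prod_marg_Cons_le assms)
  also have "\<dots> = (\<Sum>y<n. \<Sum>xs\<in>tuples n k. split_defect \<mu> S y xs) + real n
      * (\<Sum>xs\<in>tuples n k. tv_list k (marg \<mu> S xs) (prod_marg \<mu> S xs))"
  proof -
    have "(\<Sum>xs\<in>tuples n k. tv_list (length xs) (marg \<mu> S xs) (prod_marg \<mu> S xs))
        = (\<Sum>xs\<in>tuples n k. tv_list k (marg \<mu> S xs) (prod_marg \<mu> S xs))"
      by (rule sum.cong) (auto simp: tuples_def)
    then show ?thesis by (simp add: sum.distrib)
  qed
  finally have "sym_defect n \<mu> (Suc k) S \<le> (1 / real n ^ Suc k)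
      * ((\<Sum>y<n. \<Sum>xs\<in>tuples n k. split_defect \<mu> S y xs)
         + real n * (\<Sum>xs\<in>tuples n k. tv_list k (marg \<mu> S xs) (prod_marg \<mu> S xs)))"
    unfolding sym_defect_def by (simp add: divide_right_mono)
  also have "\<dots> = avg_split_defect n \<mu> k S + sym_defect n \<mu> k S"
    using assms(3) by (simp add: avg_split_defect_def sym_defect_def field_simps)
  finally show ?case using Suc by simp
qed

definition energy :: "((nat \<Rightarrow> 'a) \<Rightarrow> real) \<Rightarrow> (nat \<Rightarrow> 'a::finite) set \<Rightarrow> nat list \<Rightarrow> real" where
  "energy \<mu> S xs = (\<Sum>\<rho>\<in>words (length xs). (pattern_mass \<mu> S xs \<rho>)\<^sup>2 / msr \<mu> S)"

lemma energy_nonneg: "nonneg_fin \<mu> S \<Longrightarrow> 0 \<le> energy \<mu> S xs"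
  unfolding energy_def by (auto intro!: sum_nonneg divide_nonneg_nonneg msr_nonneg)

lemma energy_le_msr:
  assumes "nonneg_fin \<mu> S"
  shows "energy \<mu> (S :: (nat \<Rightarrow> 'a::finite) set) xs \<le> msr \<mu> S"
proof (cases "msr \<mu> S = 0")
  case True then show ?thesis by (simp add: energy_def)
next
  case False
  then have m: "msr \<mu> S > 0" using msr_nonneg[OF assms] by simp
  have "energy \<mu> S xs \<le> (\<Sum>\<rho>\<in>words (length xs). pattern_mass \<mu> S xs \<rho>)"
    unfolding energy_def
  proof (rule sum_mono)
    fix \<rho>
    have "(pattern_mass \<mu> S xs \<rho>)\<^sup>2 \<le> pattern_mass \<mu> S xs \<rho> * msr \<mu> S"
      unfolding power2_eq_square
      by (rule mult_left_mono[OF pattern_mass_le_msr[OF assms] pattern_mass_nonneg[OF assms]])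
    then show "(pattern_mass \<mu> S xs \<rho>)\<^sup>2 / msr \<mu> S \<le> pattern_mass \<mu> S xs \<rho>"
      using m by (simp add: divide_le_eq)
  qed
  then show ?thesis using sum_pattern_mass[OF assms] by simp
qed

lemma pattern_mass_Nil: "pattern_mass \<mu> S [] [] = msr \<mu> S"
  by (simp add: pattern_mass_def msr_def)

lemma pattern_mass_eq_0: "nonneg_fin \<mu> S \<Longrightarrow> msr \<mu> S = 0 \<Longrightarrow> pattern_mass \<mu> S xs \<rho> = 0"
  using pattern_mass_nonneg pattern_mass_le_msr by (metis order_antisym)

definition split_deviation ::
  "((nat \<Rightarrow> 'a) \<Rightarrow> real) \<Rightarrow> (nat \<Rightarrow> 'a) set \<Rightarrow> nat \<Rightarrow> nat list \<Rightarrow> 'a \<Rightarrow> 'a list \<Rightarrow> real" where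
  "split_deviation \<mu> S y xs b \<rho> =
     pattern_mass \<mu> {\<sigma>\<in>S. \<sigma> y = b} xs \<rho> - msr \<mu> {\<sigma>\<in>S. \<sigma> y = b} * pattern_mass \<mu> S xs \<rho> / msr \<mu> S"

lemma msr_mult_split_defect:
  fixes S :: "(nat \<Rightarrow> 'a::finite) set"
  assumes fin: "finite S" and m: "msr \<mu> S > 0"
  shows "msr \<mu> S * split_defect \<mu> S y xs
    = (\<Sum>b\<in>UNIV. \<Sum>\<rho>\<in>words (length xs). \<bar>split_deviation \<mu> S y xs b \<rho>\<bar>) / 2"
proof -
  have "msr \<mu> S * \<bar>marg \<mu> S (y # xs) (b # \<rho>) - marg1 \<mu> S y b * marg \<mu> S xs \<rho>\<bar>
      = \<bar>split_deviation \<mu> S y xs b \<rho>\<bar>" for b \<rho>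
  proof -
    have "msr \<mu> S * (marg \<mu> S (y # xs) (b # \<rho>) - marg1 \<mu> S y b * marg \<mu> S xs \<rho>)
        = split_deviation \<mu> S y xs b \<rho>"
      using m by (simp add: split_deviation_def marg_eq_pattern_mass pattern_mass_Cons[OF fin]
          marg1_marg pattern_mass_Nil field_simps)
    then show ?thesis
      using m by (metis abs_mult abs_of_pos)
  qed
  then show ?thesis
    unfolding split_defect_def tv_list_Suc by (simp add: sum_distrib_left)
qed

lemma sum_split_deviation_sq:
  fixes S :: "(nat \<Rightarrow> 'a::finite) set"
  assumes nn: "nonneg_fin \<mu> S" and m: "msr \<mu> S > 0"
  shows "(\<Sum>b\<in>UNIV. \<Sum>\<rho>\<in>words (length xs).
           (split_deviation \<mu> S y xs b \<rho>)\<^sup>2 / msr \<mu> {\<sigma>\<in>S. \<sigma> y = b})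
    = (\<Sum>b\<in>UNIV. energy \<mu> {\<sigma>\<in>S. \<sigma> y = b} xs) - energy \<mu> S xs"
proof -
  have fin: "finite S" using nn by (simp add: nonneg_fin_def)
  define l where "l = length xs"
  define mb where "mb b = msr \<mu> {\<sigma>\<in>S. \<sigma> y = b}" for b
  define Wb where "Wb b \<rho> = pattern_mass \<mu> {\<sigma>\<in>S. \<sigma> y = b} xs \<rho>" for b \<rho>
  define Ws where "Ws \<rho> = pattern_mass \<mu> S xs \<rho>" for \<rho>
  have nn_b: "nonneg_fin \<mu> {\<sigma>\<in>S. \<sigma> y = b}" for b
    by (rule nonneg_fin_subset[OF nn]) auto
  have dev_sq: "(split_deviation \<mu> S y xs b \<rho>)\<^sup>2 / mb b
      = (Wb b \<rho>)\<^sup>2 / mb b - 2 * Wb b \<rho> * Ws \<rho> / msr \<mu> S + mb b * (Ws \<rho>)\<^sup>2 / (msr \<mu> S)\<^sup>2" for b \<rho>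
  proof (cases "mb b = 0")
    case True
    then have "Wb b \<rho> = 0" unfolding Wb_def mb_def by (rule pattern_mass_eq_0[OF nn_b])
    then show ?thesis using True by (simp add: split_deviation_def Wb_def mb_def)
  next
    case False
    then show ?thesis
      using m by (simp add: split_deviation_def Wb_def Ws_def mb_def field_simps power2_eq_square)
  qed
  have "(\<Sum>b\<in>UNIV. \<Sum>\<rho>\<in>words l. (split_deviation \<mu> S y xs b \<rho>)\<^sup>2 / mb b)
      = (\<Sum>b\<in>UNIV. \<Sum>\<rho>\<in>words l. (Wb b \<rho>)\<^sup>2 / mb b)
        - (\<Sum>\<rho>\<in>words l. 2 * (\<Sum>b\<in>UNIV. Wb b \<rho>) * Ws \<rho> / msr \<mu> S)
        + (\<Sum>\<rho>\<in>words l. (\<Sum>b\<in>UNIV. mb b) * (Ws \<rho>)\<^sup>2 / (msr \<mu> S)\<^sup>2)"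
    unfolding dev_sq
    by (simp add: sum.distrib sum_subtractf sum_distrib_left sum_distrib_right sum_divide_distrib
        sum.swap[of _ UNIV "words l"] algebra_simps)
  also have "\<dots> = (\<Sum>b\<in>UNIV. energy \<mu> {\<sigma>\<in>S. \<sigma> y = b} xs) - 2 * energy \<mu> S xs + energy \<mu> S xs"
    using m unfolding Wb_def Ws_def mb_def l_def energy_def
    by (simp add: sum_pattern_mass_split_by_site[OF fin] sum_msr_split_by_site[OF fin]
        sum_distrib_left power2_eq_square mult.assoc)
  finally show ?thesis by (simp add: mb_def l_def)
qed

lemma abs_le_amgm:
  fixes e w \<gamma> :: real
  assumes "\<gamma> > 0" "w \<ge> 0" "w = 0 \<Longrightarrow> e = 0"
  shows "\<bar>e\<bar> \<le> \<gamma> * w / 2 + e\<^sup>2 / (2 * \<gamma> * w)"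
proof (cases "w = 0")
  case False
  then have gw: "\<gamma> * w > 0" using assms by simp
  have "0 \<le> (\<bar>e\<bar> - \<gamma> * w)\<^sup>2" by simp
  then have "(2 * \<bar>e\<bar> - \<gamma> * w) * (\<gamma> * w) \<le> e\<^sup>2"
    by (simp add: power2_eq_square algebra_simps)
  then have "2 * \<bar>e\<bar> - \<gamma> * w \<le> e\<^sup>2 / (\<gamma> * w)"
    using gw by (simp add: pos_le_divide_eq)
  then show ?thesis by (simp add: field_simps)
qed (use assms in simp)

lemma split_defect_energy_increment:
  fixes S :: "(nat \<Rightarrow> 'a::finite) set"
  assumes nn: "nonneg_fin \<mu> S" and g: "\<gamma> > 0"
  shows "msr \<mu> S * split_defect \<mu> S y xs \<le> \<gamma> * msr \<mu> S * real (card (UNIV::'a set)) ^ length xs / 4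
     + ((\<Sum>b\<in>UNIV. energy \<mu> {\<sigma>\<in>S. \<sigma> y = b} xs) - energy \<mu> S xs) / (4 * \<gamma>)"
proof (cases "msr \<mu> S = 0")
  case True
  have "0 \<le> (\<Sum>b\<in>UNIV. energy \<mu> {\<sigma>\<in>S. \<sigma> y = b} xs)"
    by (intro sum_nonneg energy_nonneg nonneg_fin_subset[OF nn]) auto
  then show ?thesis using True g by (simp add: energy_def)
next
  case False
  have fin: "finite S" using nn by (simp add: nonneg_fin_def)
  have m: "msr \<mu> S > 0" using False msr_nonneg[OF nn] by simp
  define l where "l = length xs"
  define mb where "mb b = msr \<mu> {\<sigma>\<in>S. \<sigma> y = b}" for b
  define e where "e b \<rho> = split_deviation \<mu> S y xs b \<rho>" for b \<rho>
  have nn_b: "nonneg_fin \<mu> {\<sigma>\<in>S. \<sigma> y = b}" for b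
    by (rule nonneg_fin_subset[OF nn]) auto
  have "\<bar>e b \<rho>\<bar> \<le> \<gamma> * mb b / 2 + (e b \<rho>)\<^sup>2 / (2 * \<gamma> * mb b)" for b \<rho>
    using g msr_nonneg[OF nn_b] pattern_mass_eq_0[OF nn_b]
    by (intro abs_le_amgm) (auto simp: e_def mb_def split_deviation_def)
  then have "(\<Sum>b\<in>UNIV. \<Sum>\<rho>\<in>words l. \<bar>e b \<rho>\<bar>)
      \<le> (\<Sum>b\<in>UNIV. \<Sum>\<rho>\<in>words l. \<gamma> * mb b / 2 + (e b \<rho>)\<^sup>2 / (2 * \<gamma> * mb b))"
    by (intro sum_mono)
  also have "\<dots> = \<gamma> / 2 * (\<Sum>b\<in>UNIV. mb b) * real (card (words l :: 'a list set))
      + (\<Sum>b\<in>UNIV. \<Sum>\<rho>\<in>words l. (e b \<rho>)\<^sup>2 / mb b) / (2 * \<gamma>)"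
    by (simp add: sum.distrib sum_distrib_left sum_distrib_right sum_divide_distrib algebra_simps)
  also have "\<dots> = \<gamma> / 2 * msr \<mu> S * real (card (UNIV::'a set)) ^ l
      + ((\<Sum>b\<in>UNIV. energy \<mu> {\<sigma>\<in>S. \<sigma> y = b} xs) - energy \<mu> S xs) / (2 * \<gamma>)"
    using sum_split_deviation_sq[OF nn m, of y xs]
    by (simp add: e_def mb_def l_def sum_msr_split_by_site[OF fin] card_lists_of_len)
  finally have "msr \<mu> S * split_defect \<mu> S y xs \<le> (\<gamma> / 2 * msr \<mu> S * real (card (UNIV::'a set)) ^ l
      + ((\<Sum>b\<in>UNIV. energy \<mu> {\<sigma>\<in>S. \<sigma> y = b} xs) - energy \<mu> S xs) / (2 * \<gamma>)) / 2"
    using msr_mult_split_defect[OF fin m, of y xs] by (simp add: e_def l_def)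
  then show ?thesis
    using g by (simp add: l_def field_simps)
qed

definition avg_energy :: "nat \<Rightarrow> ((nat \<Rightarrow> 'a::finite) \<Rightarrow> real) \<Rightarrow> nat \<Rightarrow> (nat \<Rightarrow> 'a) set \<Rightarrow> real" where
  "avg_energy n \<mu> j S = (1 / real n ^ j) * (\<Sum>xs\<in>tuples n j. energy \<mu> S xs)"

definition cum_energy :: "nat \<Rightarrow> ((nat \<Rightarrow> 'a::finite) \<Rightarrow> real) \<Rightarrow> nat \<Rightarrow> (nat \<Rightarrow> 'a) set \<Rightarrow> real" where
  "cum_energy n \<mu> k S = (\<Sum>j<k. avg_energy n \<mu> j S)"

definition geom_sum :: "nat \<Rightarrow> nat \<Rightarrow> real" where
  "geom_sum c k = (\<Sum>j<k. real c ^ j)"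

lemma avg_energy_nonneg: "nonneg_fin \<mu> S \<Longrightarrow> 0 \<le> avg_energy n \<mu> j S"
  unfolding avg_energy_def by (intro mult_nonneg_nonneg sum_nonneg energy_nonneg) auto

lemma avg_energy_le_msr:
  assumes "nonneg_fin \<mu> S" "n > 0"
  shows "avg_energy n \<mu> j S \<le> msr \<mu> S"
proof -
  have "(\<Sum>xs\<in>tuples n j. energy \<mu> S xs) \<le> (\<Sum>xs\<in>tuples n j. msr \<mu> S)"
    by (intro sum_mono energy_le_msr assms)
  also have "\<dots> = real n ^ j * msr \<mu> S" by (simp add: card_tuples)
  finally show ?thesis using assms(2) unfolding avg_energy_def by (simp add: field_simps)
qed

lemma cum_energy_nonneg: "nonneg_fin \<mu> S \<Longrightarrow> 0 \<le> cum_energy n \<mu> k S"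
  unfolding cum_energy_def by (auto intro!: sum_nonneg avg_energy_nonneg)

lemma cum_energy_le_msr:
  assumes "nonneg_fin \<mu> S" "n > 0"
  shows "cum_energy n \<mu> k S \<le> real k * msr \<mu> S"
proof -
  have "cum_energy n \<mu> k S \<le> (\<Sum>j<k. msr \<mu> S)"
    unfolding cum_energy_def by (intro sum_mono avg_energy_le_msr assms)
  then show ?thesis by simp
qed

lemma cum_energy_zero: "msr \<mu> S = 0 \<Longrightarrow> cum_energy n \<mu> k S = 0"
  by (simp add: cum_energy_def avg_energy_def energy_def)

lemma avg_split_defect_energy_increment:
  fixes S :: "(nat \<Rightarrow> 'a::finite) set"
  assumes nn: "nonneg_fin \<mu> S" and g: "\<gamma> > 0" and n: "n > 0"
  shows "msr \<mu> S * avg_split_defect n \<mu> j S \<le> \<gamma> * msr \<mu> S * real (card (UNIV::'a set)) ^ j / 4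
     + ((1 / real n) * (\<Sum>y<n. \<Sum>b\<in>UNIV. avg_energy n \<mu> j {\<sigma>\<in>S. \<sigma> y = b})
        - avg_energy n \<mu> j S) / (4 * \<gamma>)"
proof -
  define c where "c = real (card (UNIV::'a set))"
  define N where "N = real n"
  have N: "N > 0" using n by (simp add: N_def)
  have "N ^ Suc j * (msr \<mu> S * avg_split_defect n \<mu> j S)
      = (\<Sum>y<n. \<Sum>xs\<in>tuples n j. msr \<mu> S * split_defect \<mu> S y xs)"
    using N by (simp add: avg_split_defect_def N_def sum_distrib_left)
  also have "\<dots> \<le> (\<Sum>y<n. \<Sum>xs\<in>tuples n j. \<gamma> * msr \<mu> S * c ^ j / 4
          + ((\<Sum>b\<in>UNIV. energy \<mu> {\<sigma>\<in>S. \<sigma> y = b} xs) - energy \<mu> S xs) / (4 * \<gamma>))"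
    using split_defect_energy_increment[OF nn g] by (intro sum_mono) (force simp: c_def tuples_def)
  also have "\<dots> = N ^ Suc j * (\<gamma> * msr \<mu> S * c ^ j / 4)
      + (N ^ j * (\<Sum>y<n. \<Sum>b\<in>UNIV. avg_energy n \<mu> j {\<sigma>\<in>S. \<sigma> y = b})
         - N ^ Suc j * avg_energy n \<mu> j S) / (4 * \<gamma>)"
  proof -
    have "(\<Sum>y<n. \<Sum>xs\<in>tuples n j. \<Sum>b\<in>UNIV. energy \<mu> {\<sigma>\<in>S. \<sigma> y = b} xs)
        = N ^ j * (\<Sum>y<n. \<Sum>b\<in>UNIV. avg_energy n \<mu> j {\<sigma>\<in>S. \<sigma> y = b})"
      unfolding avg_energy_def using N
      by (simp add: sum_distrib_left sum.swap[of _ "tuples n j" UNIV] N_def)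
    moreover have "(\<Sum>y<n. \<Sum>xs\<in>tuples n j. energy \<mu> S xs) = N ^ Suc j * avg_energy n \<mu> j S"
      unfolding avg_energy_def using N by (simp add: N_def)
    ultimately show ?thesis
      using n by (simp add: sum.distrib sum_subtractf diff_divide_distrib
          sum_divide_distrib[symmetric] card_tuples N_def)
  qed
  also have "\<dots> = N ^ Suc j * (\<gamma> * msr \<mu> S * c ^ j / 4
      + (1 / N * (\<Sum>y<n. \<Sum>b\<in>UNIV. avg_energy n \<mu> j {\<sigma>\<in>S. \<sigma> y = b}) - avg_energy n \<mu> j S) / (4 * \<gamma>))"
    using N g by (simp add: field_simps)
  finally show ?thesis
    using N by (simp add: c_def N_def)
qed

lemma sym_defect_energy_increment:
  fixes S :: "(nat \<Rightarrow> 'a::finite) set"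
  assumes nn: "nonneg_fin \<mu> S" and g: "\<gamma> > 0" and n: "n > 0"
  shows "msr \<mu> S * sym_defect n \<mu> k S \<le> \<gamma> * msr \<mu> S * geom_sum (card (UNIV::'a set)) k / 4
     + ((1 / real n) * (\<Sum>y<n. \<Sum>b\<in>UNIV. cum_energy n \<mu> k {\<sigma>\<in>S. \<sigma> y = b})
        - cum_energy n \<mu> k S) / (4 * \<gamma>)"
proof (cases "msr \<mu> S = 0")
  case True
  have "0 \<le> (\<Sum>y<n. \<Sum>b\<in>UNIV. cum_energy n \<mu> k {\<sigma>\<in>S. \<sigma> y = b})"
    by (intro sum_nonneg cum_energy_nonneg nonneg_fin_subset[OF nn]) auto
  then show ?thesis using True g cum_energy_zero[OF True] by simp
next
  case False
  then have m: "msr \<mu> S > 0" using msr_nonneg[OF nn] by simp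
  have "msr \<mu> S * sym_defect n \<mu> k S \<le> msr \<mu> S * (\<Sum>j<k. avg_split_defect n \<mu> j S)"
    using sym_defect_le_sum_avg_split_defect[OF nn m n] m by (simp add: mult_left_mono)
  also have "\<dots> = (\<Sum>j<k. msr \<mu> S * avg_split_defect n \<mu> j S)" by (simp add: sum_distrib_left)
  also have "\<dots> \<le> (\<Sum>j<k. \<gamma> * msr \<mu> S * real (card (UNIV::'a set)) ^ j / 4
     + ((1 / real n) * (\<Sum>y<n. \<Sum>b\<in>UNIV. avg_energy n \<mu> j {\<sigma>\<in>S. \<sigma> y = b})
        - avg_energy n \<mu> j S) / (4 * \<gamma>))"
    by (intro sum_mono avg_split_defect_energy_increment nn g n)
  also have "\<dots> = \<gamma> * msr \<mu> S * geom_sum (card (UNIV::'a set)) k / 4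
     + ((1 / real n) * (\<Sum>y<n. \<Sum>b\<in>UNIV. cum_energy n \<mu> k {\<sigma>\<in>S. \<sigma> y = b})
        - cum_energy n \<mu> k S) / (4 * \<gamma>)"
    unfolding geom_sum_def cum_energy_def
    by (simp add: sum.distrib sum_subtractf sum_divide_distrib sum_distrib_left sum_distrib_right
        sum.swap[of _ "{..<k}"] diff_divide_distrib)
  finally show ?thesis .
qed

definition pinned_cell :: "nat \<Rightarrow> nat list \<Rightarrow> 'a list \<Rightarrow> (nat \<Rightarrow> 'a::finite) set" where
  "pinned_cell n ys \<tau> = {\<sigma>\<in>cube n. map \<sigma> ys = \<tau>}"

lemma finite_cube[simp]: "finite (cube n :: (nat \<Rightarrow> 'a::finite) set)"
  unfolding cube_def by (rule finite_PiE) auto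

lemma pinned_cell_Cons: "pinned_cell n (y#ys) (b#\<tau>) = {\<sigma>\<in>pinned_cell n ys \<tau>. \<sigma> y = b}"
  unfolding pinned_cell_def by auto

lemma pinned_cell_subset_cube: "pinned_cell n ys \<tau> \<subseteq> cube n" unfolding pinned_cell_def by auto

lemma nonneg_fin_cube: "is_prob n \<mu> \<Longrightarrow> nonneg_fin \<mu> (cube n)"
  unfolding is_prob_def nonneg_fin_def by simp

lemma nonneg_fin_pinned_cell: "is_prob n \<mu> \<Longrightarrow> nonneg_fin \<mu> (pinned_cell n ys \<tau>)"
  using nonneg_fin_subset[OF nonneg_fin_cube pinned_cell_subset_cube] .

lemma msr_pinned_cell: "msr \<mu> (pinned_cell n ys \<tau>) = pattern_mass \<mu> (cube n) ys \<tau>"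
  unfolding msr_def pattern_mass_def pinned_cell_def by (simp add: sum.inter_filter)

lemma sum_msr_pinned_cell:
  assumes "is_prob n \<mu>" "length ys = t"
  shows "(\<Sum>\<tau>\<in>words t. msr \<mu> (pinned_cell n ys \<tau> :: (nat \<Rightarrow> 'a::finite) set)) = 1"
  using sum_pattern_mass[OF nonneg_fin_cube[OF assms(1)], of ys] assms unfolding msr_pinned_cell
  by (simp add: is_prob_def msr_def)

definition pinned_energy :: "nat \<Rightarrow> ((nat \<Rightarrow> 'a::finite) \<Rightarrow> real) \<Rightarrow> nat \<Rightarrow> nat \<Rightarrow> real" where
  "pinned_energy n \<mu> k t = (1 / real n ^ t)
      * (\<Sum>ys\<in>tuples n t. \<Sum>\<tau>\<in>words t. cum_energy n \<mu> k (pinned_cell n ys \<tau>))"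

definition pinned_defect :: "nat \<Rightarrow> ((nat \<Rightarrow> 'a::finite) \<Rightarrow> real) \<Rightarrow> nat \<Rightarrow> nat \<Rightarrow> real" where
  "pinned_defect n \<mu> k t = (1 / real n ^ t)
      * (\<Sum>ys\<in>tuples n t. \<Sum>\<tau>\<in>words t. msr \<mu> (pinned_cell n ys \<tau>)
      * sym_defect n \<mu> k (pinned_cell n ys \<tau>))"

lemma pinned_energy_nonneg: "is_prob n \<mu> \<Longrightarrow> 0 \<le> pinned_energy n \<mu> k t"
  unfolding pinned_energy_def
  by (intro mult_nonneg_nonneg sum_nonneg cum_energy_nonneg nonneg_fin_pinned_cell) auto

lemma pinned_energy_le_k:
  assumes "is_prob n \<mu>" "n > 0"
  shows "pinned_energy n \<mu> k t \<le> real k"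
proof -
  have "(\<Sum>ys\<in>tuples n t. \<Sum>\<tau>\<in>words t. cum_energy n \<mu> k (pinned_cell n ys \<tau>))
      \<le> (\<Sum>ys\<in>tuples n t. \<Sum>\<tau>\<in>words t. real k * msr \<mu> (pinned_cell n ys \<tau>))"
    by (intro sum_mono cum_energy_le_msr nonneg_fin_pinned_cell assms)
  also have "\<dots> = (\<Sum>ys\<in>tuples n t. real k)"
    by (intro sum.cong refl)
        (simp add: sum_distrib_left[symmetric] sum_msr_pinned_cell[OF assms(1)] tuples_def)
  also have "\<dots> = real n ^ t * real k" by (simp add: card_tuples)
  finally show ?thesis using assms(2) unfolding pinned_energy_def by (simp add: field_simps)
qed

lemma sum_tuples_words_Suc:
  "(\<Sum>ys\<in>tuples n (Suc t). \<Sum>\<tau>\<in>words (Suc t). f ys \<tau>)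
    = (\<Sum>ys\<in>tuples n t. \<Sum>\<tau>\<in>words t. \<Sum>y<n. \<Sum>b\<in>UNIV. f (y # ys) (b # \<tau>))"
proof -
  have "(\<Sum>ys\<in>tuples n t. \<Sum>\<tau>\<in>words t. \<Sum>y<n. \<Sum>b\<in>UNIV. f (y # ys) (b # \<tau>))
      = (\<Sum>ys\<in>tuples n t. \<Sum>y<n. \<Sum>b\<in>UNIV. \<Sum>\<tau>\<in>words t. f (y # ys) (b # \<tau>))"
    by (intro sum.cong refl) (subst sum.swap, intro sum.cong refl, rule sum.swap)
  also have "\<dots> = (\<Sum>y<n. \<Sum>ys\<in>tuples n t. \<Sum>b\<in>UNIV. \<Sum>\<tau>\<in>words t. f (y # ys) (b # \<tau>))"
    by (rule sum.swap)
  finally show ?thesis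
    by (simp add: sum_tuples_Suc sum_lists_of_len_Suc)
qed

lemma pinned_defect_le_energy_increment:
  assumes P: "is_prob n (\<mu> :: (nat \<Rightarrow> 'a::finite) \<Rightarrow> real)" and n: "n > 0" and g: "\<gamma> > 0"
  shows "pinned_defect n \<mu> k t \<le> \<gamma> * geom_sum (card (UNIV::'a set)) k / 4
    + (pinned_energy n \<mu> k (Suc t) - pinned_energy n \<mu> k t) / (4 * \<gamma>)"
proof -
  define N where "N = real n"
  have N: "N > 0" using n by (simp add: N_def)
  define K where "K = geom_sum (card (UNIV::'a set)) k"
  define E where "E ys \<tau> = cum_energy n \<mu> k (pinned_cell n ys \<tau>)" for ys \<tau>
  have "(\<Sum>ys\<in>tuples n t. \<Sum>\<tau>\<in>words t. msr \<mu> (pinned_cell n ys \<tau>)) = (\<Sum>ys\<in>tuples n t. 1)"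
    by (intro sum.cong refl) (simp add: sum_msr_pinned_cell[OF P] tuples_def)
  then have mass: "(\<Sum>ys\<in>tuples n t. \<Sum>\<tau>\<in>words t. msr \<mu> (pinned_cell n ys \<tau>)) = N ^ t"
    by (simp add: card_tuples N_def)
  have "(\<Sum>ys\<in>tuples n t. \<Sum>\<tau>\<in>words t. msr \<mu> (pinned_cell n ys \<tau>)
      * sym_defect n \<mu> k (pinned_cell n ys \<tau>))
     \<le> (\<Sum>ys\<in>tuples n t. \<Sum>\<tau>\<in>words t. \<gamma> * K / 4 * msr \<mu> (pinned_cell n ys \<tau>)
        + (1 / N * (\<Sum>y<n. \<Sum>b\<in>UNIV. E (y # ys) (b # \<tau>)) - E ys \<tau>) / (4 * \<gamma>))"
    using sym_defect_energy_increment[OF nonneg_fin_pinned_cell[OF P] g n]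
    unfolding E_def K_def N_def pinned_cell_Cons by (intro sum_mono) (simp add: algebra_simps)
  also have "\<dots> = \<gamma> * K / 4 * (\<Sum>ys\<in>tuples n t. \<Sum>\<tau>\<in>words t. msr \<mu> (pinned_cell n ys \<tau>))
      + (1 / N * (\<Sum>ys\<in>tuples n (Suc t). \<Sum>\<tau>\<in>words (Suc t). E ys \<tau>)
         - (\<Sum>ys\<in>tuples n t. \<Sum>\<tau>\<in>words t. E ys \<tau>)) / (4 * \<gamma>)"
    unfolding sum_tuples_words_Suc
    by (simp add: sum.distrib sum_subtractf sum_distrib_left diff_divide_distrib sum_divide_distrib)
  also have "\<dots> = N ^ t
      * (\<gamma> * K / 4 + (pinned_energy n \<mu> k (Suc t) - pinned_energy n \<mu> k t) / (4 * \<gamma>))"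
    using N g unfolding mass by (simp add: pinned_energy_def E_def N_def field_simps)
  finally have "N ^ t * pinned_defect n \<mu> k t
      \<le> N ^ t * (\<gamma> * K / 4 + (pinned_energy n \<mu> k (Suc t) - pinned_energy n \<mu> k t) / (4 * \<gamma>))"
    unfolding pinned_defect_def using N by (simp add: N_def)
  then show ?thesis using N unfolding K_def by simp
qed

lemma exists_depth_small_pinned_defect:
  assumes P: "is_prob n (\<mu> :: (nat \<Rightarrow> 'a::finite) \<Rightarrow> real)" and n: "n > 0" and g: "\<gamma> > 0"
    and T: "T > 0"
  shows "\<exists>t<T. pinned_defect n \<mu> k t \<le> \<gamma> * geom_sum (card (UNIV::'a set)) k / 4
      + real k / (4 * \<gamma> * real T)"
proof (rule ccontr)
  define K where "K = geom_sum (card (UNIV::'a set)) k"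
  define b where "b = \<gamma> * K / 4 + real k / (4 * \<gamma> * real T)"
  assume "\<not> ?thesis"
  then have lt: "\<And>t. t < T \<Longrightarrow> b < pinned_defect n \<mu> k t" by (auto simp: b_def K_def not_le)
  have "(\<Sum>t<T. b) < (\<Sum>t<T. pinned_defect n \<mu> k t)"
    using T by (intro sum_strict_mono lt) auto
  also have "\<dots> \<le>
      (\<Sum>t<T. \<gamma> * K / 4 + (pinned_energy n \<mu> k (Suc t) - pinned_energy n \<mu> k t) / (4 * \<gamma>))"
    unfolding K_def by (intro sum_mono pinned_defect_le_energy_increment P n g)
  also have "\<dots> = real T * (\<gamma> * K / 4) + (pinned_energy n \<mu> k T - pinned_energy n \<mu> k 0) / (4 * \<gamma>)"
    by (simp add: sum.distrib sum_divide_distrib[symmetric] sum_lessThan_telescope)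
  also have "\<dots> \<le> real T * (\<gamma> * K / 4) + real k / (4 * \<gamma>)"
    using pinned_energy_le_k[OF P n, of k T] pinned_energy_nonneg[OF P, of k 0] g
    by (simp add: divide_right_mono)
  also have "\<dots> = (\<Sum>t<T. b)" using T g by (simp add: b_def field_simps)
  finally show False by simp
qed

lemma sum_pinned_cells:
  assumes "length ys = t"
  shows "(\<Sum>\<tau>\<in>words t. \<Sum>\<sigma>\<in>pinned_cell n ys \<tau>. g \<sigma>) = (\<Sum>\<sigma>\<in>(cube n :: (nat \<Rightarrow> 'a::finite) set). g \<sigma>)"
proof -
  have "(\<Sum>\<tau>\<in>words t. \<Sum>\<sigma>\<in>pinned_cell n ys \<tau>. g \<sigma>)
      = (\<Sum>\<tau>\<in>words t. \<Sum>\<sigma>\<in>cube n. if map \<sigma> ys = \<tau> then g \<sigma> else 0)"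
    unfolding pinned_cell_def by (simp add: sum.inter_filter)
  also have "\<dots> = (\<Sum>\<sigma>\<in>cube n. \<Sum>\<tau>\<in>words t. if map \<sigma> ys = \<tau> then g \<sigma> else 0)" by (rule sum.swap)
  also have "\<dots> = (\<Sum>\<sigma>\<in>cube n. g \<sigma>)"
  proof (rule sum.cong[OF refl])
    fix \<sigma> :: "nat \<Rightarrow> 'a"
    have "map \<sigma> ys \<in> words t" using assms by (simp add: lists_of_len_def)
    then show "(\<Sum>\<tau>\<in>words t. if map \<sigma> ys = \<tau> then g \<sigma> else 0) = g \<sigma>" by (simp add: sum.delta)
  qed
  finally show ?thesis .
qed

lemma msr_mult_marg: "nonneg_fin \<mu> S \<Longrightarrow> msr \<mu> S * marg \<mu> S xs \<rho> = pattern_mass \<mu> S xs \<rho>"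
proof (cases "msr \<mu> S = 0")
  case True
  assume "nonneg_fin \<mu> S"
  then show ?thesis using True pattern_mass_eq_0 by simp
next
  case False
  then show ?thesis by (simp add: marg_eq_pattern_mass)
qed

lemma msr_cube: "is_prob n \<mu> \<Longrightarrow> msr \<mu> (cube n) = 1" by (simp add: is_prob_def msr_def)

lemma marg_cube_mixture:
  assumes P: "is_prob n \<mu>" and len: "length ys = t"
  shows "marg \<mu> (cube n) xs \<rho>
      = (\<Sum>\<tau>\<in>words t. msr \<mu> (pinned_cell n ys \<tau>) * marg \<mu> (pinned_cell n ys \<tau>) xs \<rho>)"
proof -
  have "marg \<mu> (cube n) xs \<rho>
      = pattern_mass \<mu> (cube n) xs \<rho>" by (simp add: marg_eq_pattern_mass msr_cube[OF P])
  also have "\<dots> = (\<Sum>\<tau>\<in>words t. pattern_mass \<mu> (pinned_cell n ys \<tau>) xs \<rho>)"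
    unfolding pattern_mass_def by (rule sum_pinned_cells[OF len, symmetric])
  also have "\<dots> = (\<Sum>\<tau>\<in>words t. msr \<mu> (pinned_cell n ys \<tau>) * marg \<mu> (pinned_cell n ys \<tau>) xs \<rho>)"
    by (simp add: msr_mult_marg nonneg_fin_pinned_cell[OF P])
  finally show ?thesis .
qed

lemma marg1_cube_mixture:
  assumes P: "is_prob n \<mu>" and len: "length ys = t"
  shows "marg1 \<mu> (cube n) x a
      = (\<Sum>\<tau>\<in>words t. msr \<mu> (pinned_cell n ys \<tau>) * marg1 \<mu> (pinned_cell n ys \<tau>) x a)"
  unfolding marg1_marg by (rule marg_cube_mixture[OF P len])

lemma tv_list_convex:
  assumes fin: "finite I" and m0: "\<And>i. i \<in> I \<Longrightarrow> 0 \<le> m i" and m1: "(\<Sum>i\<in>I. m i) = 1"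
  shows "tv_list l (\<lambda>\<rho>. \<Sum>i\<in>I. m i * p i \<rho>) q
      \<le> (\<Sum>i\<in>I. m i * tv_list l (p i) (q :: 'a::finite list \<Rightarrow> real))"
proof -
  have "(\<Sum>\<rho>\<in>words l. \<bar>(\<Sum>i\<in>I. m i * p i \<rho>) - q \<rho>\<bar>) \<le> (\<Sum>\<rho>\<in>words l. \<Sum>i\<in>I. m i * \<bar>p i \<rho> - q \<rho>\<bar>)"
  proof (rule sum_mono)
    fix \<rho>
    have "(\<Sum>i\<in>I. m i * p i \<rho>) - q \<rho> = (\<Sum>i\<in>I. m i * (p i \<rho> - q \<rho>))"
      using m1 by (simp add: right_diff_distrib sum_subtractf sum_distrib_right[symmetric])
    also have "\<bar>\<dots>\<bar> \<le> (\<Sum>i\<in>I. \<bar>m i * (p i \<rho> - q \<rho>)\<bar>)" by (rule sum_abs)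
    also have "\<dots> = (\<Sum>i\<in>I. m i * \<bar>p i \<rho> - q \<rho>\<bar>)" using m0 by (intro sum.cong refl)
        (simp add: abs_mult)
    finally show "\<bar>(\<Sum>i\<in>I. m i * p i \<rho>) - q \<rho>\<bar> \<le> (\<Sum>i\<in>I. m i * \<bar>p i \<rho> - q \<rho>\<bar>)" .
  qed
  also have "\<dots> = (\<Sum>i\<in>I. m i * (\<Sum>\<rho>\<in>words l. \<bar>p i \<rho> - q \<rho>\<bar>))"
    by (simp add: sum_distrib_left) (rule sum.swap)
  finally show ?thesis unfolding tv_list_words
    by (simp add: sum_divide_distrib[symmetric] divide_right_mono)
qed

lemma tv1_convex:
  assumes fin: "finite I" and m0: "\<And>i. i \<in> I \<Longrightarrow> 0 \<le> m i" and m1: "(\<Sum>i\<in>I. m i) = 1"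
  shows "tv1 q (\<lambda>a. \<Sum>i\<in>I. m i * p i a) \<le> (\<Sum>i\<in>I. m i * tv1 q (p i :: 'a::finite \<Rightarrow> real))"
proof -
  have "(\<Sum>a\<in>UNIV. \<bar>q a - (\<Sum>i\<in>I. m i * p i a)\<bar>) \<le> (\<Sum>a\<in>UNIV. \<Sum>i\<in>I. m i * \<bar>q a - p i a\<bar>)"
  proof (rule sum_mono)
    fix a
    have "q a - (\<Sum>i\<in>I. m i * p i a) = (\<Sum>i\<in>I. m i * (q a - p i a))"
      using m1 by (simp add: right_diff_distrib sum_subtractf sum_distrib_right[symmetric])
    also have "\<bar>\<dots>\<bar> \<le> (\<Sum>i\<in>I. \<bar>m i * (q a - p i a)\<bar>)" by (rule sum_abs)
    also have "\<dots> = (\<Sum>i\<in>I. m i * \<bar>q a - p i a\<bar>)" using m0 by (intro sum.cong refl)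
        (simp add: abs_mult)
    finally show "\<bar>q a - (\<Sum>i\<in>I. m i * p i a)\<bar> \<le> (\<Sum>i\<in>I. m i * \<bar>q a - p i a\<bar>)" .
  qed
  also have "\<dots> = (\<Sum>i\<in>I. m i * (\<Sum>a\<in>UNIV. \<bar>q a - p i a\<bar>))"
    by (simp add: sum_distrib_left) (rule sum.swap)
  finally show ?thesis unfolding tv1_def
    by (simp add: sum_divide_distrib[symmetric] divide_right_mono)
qed

definition marg_dist ::
  "nat \<Rightarrow> ((nat \<Rightarrow> 'a::finite) \<Rightarrow> real) \<Rightarrow> (nat \<Rightarrow> 'a) set \<Rightarrow> (nat \<Rightarrow> 'a) set \<Rightarrow> real" where
  "marg_dist n \<mu> S1 S2 = (1 / real n) * (\<Sum>x<n. tv1 (marg1 \<mu> S1 x) (marg1 \<mu> S2 x))"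

definition heavy_states_close ::
  "nat \<Rightarrow> ((nat \<Rightarrow> 'a::finite) \<Rightarrow> real) \<Rightarrow> real \<Rightarrow> real \<Rightarrow> nat \<Rightarrow> bool" where
  "heavy_states_close n \<mu> \<delta> \<eta> k \<longleftrightarrow> (\<forall>S1 S2. is_state n \<mu> \<delta> k S1 \<and> is_state n \<mu> \<delta> k S2 \<and>
     msr \<mu> S1 \<ge> \<eta> \<and> msr \<mu> S2 \<ge> \<eta> \<longrightarrow> marg_dist n \<mu> S1 S2 < \<delta>)"

lemma tv1_marg1_le_1:
  assumes "nonneg_fin \<mu> S1" "nonneg_fin \<mu> S2"
  shows "tv1 (marg1 \<mu> S1 x) (marg1 \<mu> (S2 :: (nat \<Rightarrow> 'a::finite) set) x) \<le> 1"
proof -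
  have s: "(\<Sum>a\<in>UNIV. marg1 \<mu> S x a) \<le> 1" if "nonneg_fin \<mu> S" for S :: "(nat \<Rightarrow> 'a) set"
  proof (cases "msr \<mu> S = 0")
    case True then show ?thesis by (simp add: marg1_def)
  next
    case False then show ?thesis using sum_marg1[OF that] msr_nonneg[OF that] by simp
  qed
  have "(\<Sum>a\<in>UNIV. \<bar>marg1 \<mu> S1 x a - marg1 \<mu> S2 x a\<bar>) \<le> (\<Sum>a\<in>UNIV. marg1 \<mu> S1 x a + marg1 \<mu> S2 x a)"
    using marg1_nonneg[OF assms(1)] marg1_nonneg[OF assms(2)]
    by (intro sum_mono) (simp add: abs_le_iff)
  then show ?thesis using s[OF assms(1)] s[OF assms(2)] by (simp add: tv1_def sum.distrib)
qed

lemma marg_dist_le_1: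
  assumes "nonneg_fin \<mu> S1" "nonneg_fin \<mu> S2" "n > 0"
  shows "marg_dist n \<mu> S1 (S2 :: (nat \<Rightarrow> 'a::finite) set) \<le> 1"
proof -
  have "(\<Sum>x<n. tv1 (marg1 \<mu> S1 x) (marg1 \<mu> S2 x)) \<le> (\<Sum>x<n. 1)"
    by (intro sum_mono tv1_marg1_le_1 assms)
  then show ?thesis using assms(3) by (simp add: marg_dist_def field_simps)
qed

lemma avg_tv_prod_marg_le_marg_dist:
  assumes N1: "nonneg_fin \<mu> S1" "msr \<mu> S1 > 0" and N2: "nonneg_fin \<mu> S2" "msr \<mu> S2 > 0"
    and n: "n > 0"
  shows "(1 / real n ^ k) * (\<Sum>xs\<in>tuples n k.
      tv_list k (prod_marg \<mu> S1 xs) (prod_marg \<mu> (S2 :: (nat \<Rightarrow> 'a::finite) set) xs))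
    \<le> real k * marg_dist n \<mu> S1 S2"
proof (induction k)
  case 0
  then show ?case by (simp add: tuples_0 tv_list_def)
next
  case (Suc k)
  have "(\<Sum>xs\<in>tuples n (Suc k). tv_list (Suc k) (prod_marg \<mu> S1 xs) (prod_marg \<mu> S2 xs))
     = (\<Sum>y<n. \<Sum>xs\<in>tuples n k. tv_list (Suc k) (prod_marg \<mu> S1 (y#xs)) (prod_marg \<mu> S2 (y#xs)))"
    by (simp add: sum_tuples_Suc)
  also have "\<dots> \<le>
      (\<Sum>y<n. \<Sum>xs\<in>tuples n k. tv1 (marg1 \<mu> S1 y) (marg1 \<mu> S2 y)
      + tv_list k (prod_marg \<mu> S1 xs) (prod_marg \<mu> S2 xs))"
  proof (intro sum_mono)
    fix y xs assume "xs \<in> tuples n k"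
    then have l: "length xs = k" by (simp add: tuples_def)
    show "tv_list (Suc k) (prod_marg \<mu> S1 (y#xs)) (prod_marg \<mu> S2 (y#xs))
        \<le> tv1 (marg1 \<mu> S1 y) (marg1 \<mu> S2 y) + tv_list k (prod_marg \<mu> S1 xs) (prod_marg \<mu> S2 xs)"
      by (rule tv_list_Cons_product_le)
          (auto simp: marg1_nonneg[OF N1(1)] sum_marg1[OF N1] prod_marg_nonneg[OF N2(1)]
            sum_prod_marg[OF N2, of xs, unfolded l] prod_marg_Cons)
  qed
  also have "\<dots> = real n ^ k * (\<Sum>y<n. tv1 (marg1 \<mu> S1 y) (marg1 \<mu> S2 y)) + real n
      * (\<Sum>xs\<in>tuples n k. tv_list k (prod_marg \<mu> S1 xs) (prod_marg \<mu> S2 xs))"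
    by (simp add: sum.distrib card_tuples sum_distrib_left)
  finally have "(1 / real n ^ Suc k)
      * (\<Sum>xs\<in>tuples n (Suc k). tv_list (Suc k) (prod_marg \<mu> S1 xs) (prod_marg \<mu> S2 xs))
     \<le> (1 / real n ^ Suc k)
         * (real n ^ k * (\<Sum>y<n. tv1 (marg1 \<mu> S1 y) (marg1 \<mu> S2 y)) + real n
         * (\<Sum>xs\<in>tuples n k. tv_list k (prod_marg \<mu> S1 xs) (prod_marg \<mu> S2 xs)))"
    using n by (intro mult_left_mono) auto
  also have "\<dots> = marg_dist n \<mu> S1 S2 + (1 / real n ^ k)
      * (\<Sum>xs\<in>tuples n k. tv_list k (prod_marg \<mu> S1 xs) (prod_marg \<mu> S2 xs))"
    using n by (simp add: marg_dist_def field_simps)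
  finally show ?case using Suc by (simp add: algebra_simps)
qed

lemma marg_dist_cube_le_mixture:
  assumes P: "is_prob n \<mu>" and len: "length ys = t"
  shows "marg_dist n \<mu> S (cube n)
      \<le> (\<Sum>\<tau>'\<in>words t. msr \<mu> (pinned_cell n ys \<tau>')
      * marg_dist n \<mu> S (pinned_cell n ys \<tau>' :: (nat \<Rightarrow> 'a::finite) set))"
proof -
  have m0: "\<And>\<tau>. \<tau> \<in> words t \<Longrightarrow> 0 \<le> msr \<mu> (pinned_cell n ys \<tau> :: (nat \<Rightarrow> 'a) set)"
    by (rule msr_nonneg[OF nonneg_fin_pinned_cell[OF P]])
  have m1: "(\<Sum>\<tau>\<in>words t. msr \<mu> (pinned_cell n ys \<tau> :: (nat \<Rightarrow> 'a) set)) = 1"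
    by (rule sum_msr_pinned_cell[OF P len])
  have "tv1 (marg1 \<mu> S x) (marg1 \<mu> (cube n) x)
      \<le> (\<Sum>\<tau>'\<in>words t. msr \<mu> (pinned_cell n ys \<tau>')
      * tv1 (marg1 \<mu> S x) (marg1 \<mu> (pinned_cell n ys \<tau>' :: (nat \<Rightarrow> 'a) set) x))" for x
  proof -
    have "marg1 \<mu> (cube n) x
        = (\<lambda>a. \<Sum>\<tau>'\<in>words t. msr \<mu> (pinned_cell n ys \<tau>')
        * marg1 \<mu> (pinned_cell n ys \<tau>' :: (nat \<Rightarrow> 'a) set) x a)"
      by (rule ext, rule marg1_cube_mixture[OF P len])
    then show ?thesis using tv1_convex[OF finite_lists_of_len m0 m1] by simp
  qed
  then have "(\<Sum>x<n. tv1 (marg1 \<mu> S x) (marg1 \<mu> (cube n) x))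
      \<le> (\<Sum>x<n. \<Sum>\<tau>'\<in>words t. msr \<mu> (pinned_cell n ys \<tau>')
      * tv1 (marg1 \<mu> S x) (marg1 \<mu> (pinned_cell n ys \<tau>' :: (nat \<Rightarrow> 'a) set) x))"
    by (intro sum_mono)
  also have "\<dots> = (\<Sum>\<tau>'\<in>words t. msr \<mu> (pinned_cell n ys \<tau>')
      * (\<Sum>x<n. tv1 (marg1 \<mu> S x) (marg1 \<mu> (pinned_cell n ys \<tau>' :: (nat \<Rightarrow> 'a) set) x)))"
    by (simp add: sum_distrib_left) (rule sum.swap)
  finally show ?thesis unfolding marg_dist_def
    by (simp add: sum_distrib_left[symmetric] sum_divide_distrib[symmetric] divide_right_mono)
qed

lemma sym_defect_cube_le_mixture:
  assumes P: "is_prob n \<mu>" and n: "n > 0" and len: "length ys = t"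
  shows "sym_defect n \<mu> k (cube n)
      \<le> (\<Sum>\<tau>\<in>words t. msr \<mu> (pinned_cell n ys \<tau>) * sym_defect n \<mu> k (pinned_cell n ys \<tau>))
     + real k * (\<Sum>\<tau>\<in>words t. \<Sum>\<tau>'\<in>words t. msr \<mu> (pinned_cell n ys \<tau>) * msr \<mu> (pinned_cell n ys \<tau>')
         * marg_dist n \<mu> (pinned_cell n ys \<tau>) (pinned_cell n ys \<tau>' :: (nat \<Rightarrow> 'a::finite) set))"
proof -
  define m where "m \<tau> = msr \<mu> (pinned_cell n ys \<tau> :: (nat \<Rightarrow> 'a) set)" for \<tau>
  define C where "C \<tau> = (pinned_cell n ys \<tau> :: (nat \<Rightarrow> 'a) set)" for \<tau>
  have m0: "\<And>\<tau>. \<tau> \<in> words t \<Longrightarrow> 0 \<le> m \<tau>"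
    unfolding m_def by (rule msr_nonneg[OF nonneg_fin_pinned_cell[OF P]])
  have m1: "(\<Sum>\<tau>\<in>words t. m \<tau>) = 1" unfolding m_def by (rule sum_msr_pinned_cell[OF P len])
  define Pr where "Pr S = (1 / real n ^ k)
      * (\<Sum>xs\<in>tuples n k. tv_list k (prod_marg \<mu> S xs) (prod_marg \<mu> (cube n) xs))" for S
  have step: "tv_list k (marg \<mu> (cube n) xs) (prod_marg \<mu> (cube n) xs)
     \<le> (\<Sum>\<tau>\<in>words t. m \<tau>
         * (tv_list k (marg \<mu> (C \<tau>) xs) (prod_marg \<mu> (C \<tau>) xs)
         + tv_list k (prod_marg \<mu> (C \<tau>) xs) (prod_marg \<mu> (cube n) xs)))" for xs
  proof -
    have "marg \<mu> (cube n) xs = (\<lambda>\<rho>. \<Sum>\<tau>\<in>words t. m \<tau> * marg \<mu> (C \<tau>) xs \<rho>)"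
      unfolding m_def C_def by (rule ext, rule marg_cube_mixture[OF P len])
    then have "tv_list k (marg \<mu> (cube n) xs) (prod_marg \<mu> (cube n) xs)
        \<le> (\<Sum>\<tau>\<in>words t. m \<tau> * tv_list k (marg \<mu> (C \<tau>) xs) (prod_marg \<mu> (cube n) xs))"
      using tv_list_convex[OF finite_lists_of_len m0 m1] by simp
    also have "\<dots> \<le>
        (\<Sum>\<tau>\<in>words t. m \<tau>
        * (tv_list k (marg \<mu> (C \<tau>) xs) (prod_marg \<mu> (C \<tau>) xs)
        + tv_list k (prod_marg \<mu> (C \<tau>) xs) (prod_marg \<mu> (cube n) xs)))"
      by (intro sum_mono mult_left_mono tv_list_triangle m0)
    finally show ?thesis .
  qed
  have "sym_defect n \<mu> k (cube n) \<le> (1 / real n ^ k)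
      * (\<Sum>xs\<in>tuples n k. \<Sum>\<tau>\<in>words t. m \<tau>
      * (tv_list k (marg \<mu> (C \<tau>) xs) (prod_marg \<mu> (C \<tau>) xs)
      + tv_list k (prod_marg \<mu> (C \<tau>) xs) (prod_marg \<mu> (cube n) xs)))"
    unfolding sym_defect_def using n by (intro mult_left_mono sum_mono step) auto
  also have "\<dots> = (\<Sum>\<tau>\<in>words t. m \<tau> * sym_defect n \<mu> k (C \<tau>)) + (\<Sum>\<tau>\<in>words t. m \<tau> * Pr (C \<tau>))"
  proof -
    have "(\<Sum>xs\<in>tuples n k. \<Sum>\<tau>\<in>words t. m \<tau>
        * (tv_list k (marg \<mu> (C \<tau>) xs) (prod_marg \<mu> (C \<tau>) xs)
        + tv_list k (prod_marg \<mu> (C \<tau>) xs) (prod_marg \<mu> (cube n) xs)))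
      = (\<Sum>\<tau>\<in>words t. \<Sum>xs\<in>tuples n k. m \<tau>
          * (tv_list k (marg \<mu> (C \<tau>) xs) (prod_marg \<mu> (C \<tau>) xs)
          + tv_list k (prod_marg \<mu> (C \<tau>) xs) (prod_marg \<mu> (cube n) xs)))"
      by (rule sum.swap)
    then show ?thesis unfolding sym_defect_def Pr_def
      by (simp add: sum_distrib_left distrib_left sum.distrib)
  qed
  also have "\<dots> \<le> (\<Sum>\<tau>\<in>words t. m \<tau> * sym_defect n \<mu> k (C \<tau>))
      + (\<Sum>\<tau>\<in>words t. m \<tau> * (real k * (\<Sum>\<tau>'\<in>words t. m \<tau>' * marg_dist n \<mu> (C \<tau>) (C \<tau>'))))"
  proof -
    have "m \<tau> * Pr (C \<tau>) \<le> m \<tau> * (real k * (\<Sum>\<tau>'\<in>words t. m \<tau>' * marg_dist n \<mu> (C \<tau>) (C \<tau>')))"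
      if "\<tau> \<in> words t" for \<tau>
    proof (cases "m \<tau> = 0")
      case True then show ?thesis by simp
    next
      case False
      then have mp: "m \<tau> > 0" using m0[OF that] by simp
      have "Pr (C \<tau>) \<le> real k * marg_dist n \<mu> (C \<tau>) (cube n)"
        unfolding Pr_def C_def
        by (rule avg_tv_prod_marg_le_marg_dist[OF nonneg_fin_pinned_cell[OF P] _
            nonneg_fin_cube[OF P] _ n]) (use mp msr_cube[OF P] in \<open>auto simp: m_def\<close>)
      also have "\<dots> \<le> real k * (\<Sum>\<tau>'\<in>words t. m \<tau>' * marg_dist n \<mu> (C \<tau>) (C \<tau>'))"
        unfolding m_def C_def by (intro mult_left_mono marg_dist_cube_le_mixture[OF P len]) auto
      finally show ?thesis using mp by simp
    qed
    then show ?thesis by (intro add_left_mono sum_mono) auto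
  qed
  also have "\<dots> = (\<Sum>\<tau>\<in>words t. m \<tau> * sym_defect n \<mu> k (C \<tau>)) + real k
      * (\<Sum>\<tau>\<in>words t. \<Sum>\<tau>'\<in>words t. m \<tau> * m \<tau>' * marg_dist n \<mu> (C \<tau>) (C \<tau>'))"
    by (simp add: sum_distrib_left mult.assoc mult.left_commute)
  finally show ?thesis unfolding m_def C_def .
qed

lemma weighted_sum_dist_le:
  fixes m D :: "'i \<Rightarrow> real" and d :: "'i \<Rightarrow> 'i \<Rightarrow> real"
  assumes fin: "finite I" and m0: "\<And>i. i \<in> I \<Longrightarrow> 0 \<le> m i" and m1: "(\<Sum>i\<in>I. m i) = 1"
    and D0: "\<And>i. i \<in> I \<Longrightarrow> 0 \<le> D i" and d1: "\<And>i j. i \<in> I \<Longrightarrow> j \<in> I \<Longrightarrow> d i j \<le> 1"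
    and \<delta>: "\<delta> > 0" and \<eta>: "\<eta> \<ge> 0"
    and close: "\<And>i j. i \<in> I \<Longrightarrow> j \<in> I \<Longrightarrow> m i \<ge> \<eta> \<Longrightarrow> D i < \<delta> \<Longrightarrow> m j \<ge> \<eta> \<Longrightarrow> D j < \<delta>
      \<Longrightarrow> d i j < \<delta>"
  shows "(\<Sum>i\<in>I. \<Sum>j\<in>I. m i * m j * d i j) \<le> \<delta> + 2 * (real (card I) * \<eta> + (\<Sum>i\<in>I. m i * D i) / \<delta>)"
proof -
  define bad where "bad i = (if m i \<ge> \<eta> \<and> D i < \<delta> then 0 else 1::real)" for i
  have bad0: "0 \<le> bad i" for i by (simp add: bad_def)
  have "m i * m j * d i j \<le> m i * m j * (\<delta> + bad i + bad j)" if "i \<in> I" "j \<in> I" for i j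
  proof (intro mult_left_mono)
    show "d i j \<le> \<delta> + bad i + bad j"
      using close[OF that] d1[OF that] \<delta> by (auto simp: bad_def)
  qed (simp add: m0 that)
  then have "(\<Sum>i\<in>I. \<Sum>j\<in>I. m i * m j * d i j)
      \<le> (\<Sum>i\<in>I. \<Sum>j\<in>I. \<delta> * (m j * m i) + m j * (m i * bad i) + m i * (m j * bad j))"
    by (intro sum_mono) (simp add: algebra_simps)
  also have "\<dots> = \<delta> + 2 * (\<Sum>i\<in>I. m i * bad i)"
    using m1 by (simp add: sum.distrib sum_distrib_left[symmetric] sum_distrib_right[symmetric]
        sum.swap[of "\<lambda>i j. m j * (m i * bad i)"])
  also have "(\<Sum>i\<in>I. m i * bad i) \<le> (\<Sum>i\<in>I. \<eta> + m i * D i / \<delta>)"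
  proof (intro sum_mono)
    fix i assume i: "i \<in> I"
    have "m i \<le> m i * D i / \<delta>" if "D i \<ge> \<delta>"
      using that m0[OF i] \<delta> by (simp add: pos_le_divide_eq mult_left_mono)
    moreover have "0 \<le> m i * D i / \<delta>"
      using m0[OF i] D0[OF i] \<delta> by simp
    ultimately show "m i * bad i \<le> \<eta> + m i * D i / \<delta>"
      using \<eta> by (auto simp: bad_def)
  qed
  finally show ?thesis
    by (simp add: sum.distrib sum_divide_distrib)
qed

lemma sym_defect_cube_le_pinned_cells:
  assumes P: "is_prob n (\<mu> :: (nat \<Rightarrow> 'a::finite) \<Rightarrow> real)" and n: "n > 0" and len: "length ys = t"
    and d: "\<delta> > 0" and e: "\<eta> > 0"
    and hyp: "heavy_states_close n \<mu> \<delta> \<eta> k"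
  shows "sym_defect n \<mu> k (cube n) \<le> (1 + 2 * real k / \<delta>)
      * (\<Sum>\<tau>\<in>words t. msr \<mu> (pinned_cell n ys \<tau>) * sym_defect n \<mu> k (pinned_cell n ys \<tau>))
     + real k * \<delta> + 2 * real k * real (card (UNIV::'a set)) ^ t * \<eta>"
proof -
  define m where "m \<tau> = msr \<mu> (pinned_cell n ys \<tau> :: (nat \<Rightarrow> 'a) set)" for \<tau>
  define C where "C \<tau> = (pinned_cell n ys \<tau> :: (nat \<Rightarrow> 'a) set)" for \<tau>
  define X where "X = (\<Sum>\<tau>\<in>words t. m \<tau> * sym_defect n \<mu> k (C \<tau>))"
  have "(\<Sum>\<tau>\<in>words t. \<Sum>\<tau>'\<in>words t. m \<tau> * m \<tau>' * marg_dist n \<mu> (C \<tau>) (C \<tau>'))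
      \<le> \<delta> + 2 * (real (card (words t :: 'a list set)) * \<eta> + X / \<delta>)"
    unfolding X_def
  proof (rule weighted_sum_dist_le)
    fix \<tau> \<tau>' assume "m \<tau> \<ge> \<eta>" "sym_defect n \<mu> k (C \<tau>) < \<delta>" "m \<tau>' \<ge> \<eta>" "sym_defect n \<mu> k (C \<tau>') < \<delta>"
    then have "is_state n \<mu> \<delta> k (C \<tau>) \<and> is_state n \<mu> \<delta> k (C \<tau>') \<and> msr \<mu> (C \<tau>) \<ge> \<eta>
        \<and> msr \<mu> (C \<tau>') \<ge> \<eta>"
      using e unfolding is_state_iff_sym_defect m_def C_def by (auto simp: pinned_cell_subset_cube)
    then show "marg_dist n \<mu> (C \<tau>) (C \<tau>') < \<delta>"
      using hyp unfolding heavy_states_close_def by blast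
  qed (use d e in \<open>auto simp: m_def C_def msr_nonneg nonneg_fin_pinned_cell[OF P]
        sum_msr_pinned_cell[OF P len] marg_dist_le_1 n sym_defect_nonneg\<close>)
  then have dist: "(\<Sum>\<tau>\<in>words t. \<Sum>\<tau>'\<in>words t. m \<tau> * m \<tau>' * marg_dist n \<mu> (C \<tau>) (C \<tau>'))
      \<le> \<delta> + 2 * (real (card (UNIV::'a set)) ^ t * \<eta> + X / \<delta>)"
    by (simp add: card_lists_of_len)
  have "sym_defect n \<mu> k (cube n)
      \<le> X + real k * (\<Sum>\<tau>\<in>words t. \<Sum>\<tau>'\<in>words t. m \<tau> * m \<tau>' * marg_dist n \<mu> (C \<tau>) (C \<tau>'))"
    using sym_defect_cube_le_mixture[OF P n len, of k] unfolding X_def m_def C_def .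
  also have "\<dots> \<le> X + real k * (\<delta> + 2 * (real (card (UNIV::'a set)) ^ t * \<eta> + X / \<delta>))"
    using dist by (intro add_left_mono mult_left_mono) auto
  also have "\<dots> = (1 + 2 * real k / \<delta>) * X + real k * \<delta> + 2 * real k
      * real (card (UNIV::'a set)) ^ t * \<eta>"
    by (simp add: algebra_simps)
  finally show ?thesis unfolding X_def m_def C_def .
qed

lemma sym_defect_cube_le_pinned_defect:
  assumes P: "is_prob n (\<mu> :: (nat \<Rightarrow> 'a::finite) \<Rightarrow> real)" and n: "n > 0"
    and d: "\<delta> > 0" and e: "\<eta> > 0"
    and hyp: "heavy_states_close n \<mu> \<delta> \<eta> k"
  shows "sym_defect n \<mu> k (cube n) \<le> (1 + 2 * real k / \<delta>) * pinned_defect n \<mu> k t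
    + real k * \<delta> + 2 * real k * real (card (UNIV::'a set)) ^ t * \<eta>"
proof -
  define A where "A = (1 + 2 * real k / \<delta>)"
  define B where "B = real k * \<delta> + 2 * real k * real (card (UNIV::'a set)) ^ t * \<eta>"
  have "(\<Sum>ys\<in>tuples n t. sym_defect n \<mu> k (cube n))
      \<le> (\<Sum>ys\<in>tuples n t. A
      * (\<Sum>\<tau>\<in>words t. msr \<mu> (pinned_cell n ys \<tau>) * sym_defect n \<mu> k (pinned_cell n ys \<tau>)) + B)"
  proof (intro sum_mono)
    fix ys assume "ys \<in> tuples n t"
    then have "length ys = t" by (simp add: tuples_def)
    from sym_defect_cube_le_pinned_cells[OF P n this d e hyp] show "sym_defect n \<mu> k (cube n) \<le> A
        * (\<Sum>\<tau>\<in>words t. msr \<mu> (pinned_cell n ys \<tau>) * sym_defect n \<mu> k (pinned_cell n ys \<tau>)) + B"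
      by (simp add: A_def B_def add.assoc)
  qed
  also have "\<dots> = A * (real n ^ t * pinned_defect n \<mu> k t) + real n ^ t * B"
    using n by (simp add: pinned_defect_def sum.distrib sum_distrib_left[symmetric] card_tuples)
  finally have "real n ^ t * sym_defect n \<mu> k (cube n) \<le> real n ^ t
      * (A * pinned_defect n \<mu> k t + B)"
    by (simp add: card_tuples algebra_simps)
  then have "sym_defect n \<mu> k (cube n) \<le> A * pinned_defect n \<mu> k t + B" using n by simp
  then show ?thesis by (simp add: A_def B_def add.assoc)
qed

lemma sym_defect_cube_le_params:
  assumes P: "is_prob n (\<mu> :: (nat \<Rightarrow> 'a::finite) \<Rightarrow> real)" and n: "n > 0"
    and d: "\<delta> > 0" and e: "\<eta> > 0" and g: "\<gamma> > 0" and T: "T > 0"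
    and hyp: "heavy_states_close n \<mu> \<delta> \<eta> k"
  shows "sym_defect n \<mu> k (cube n) \<le> (1 + 2 * real k / \<delta>)
      * (\<gamma> * geom_sum (card (UNIV::'a set)) k / 4 + real k / (4 * \<gamma> * real T))
    + real k * \<delta> + 2 * real k * real (card (UNIV::'a set)) ^ T * \<eta>"
proof -
  obtain t where t: "t < T"
    and small: "pinned_defect n \<mu> k t \<le> \<gamma> * geom_sum (card (UNIV::'a set)) k / 4
        + real k / (4 * \<gamma> * real T)"
    using exists_depth_small_pinned_defect[OF P n g T] by blast
  have "real (card (UNIV::'a set)) ^ t \<le> real (card (UNIV::'a set)) ^ T"
    using t by (intro power_increasing) (auto simp: Suc_le_eq card_gt_0_iff)
  then show ?thesis
    using sym_defect_cube_le_pinned_defect[OF P n d e hyp, of t] small d e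
    by (smt (verit) mult_left_mono mult_right_mono of_nat_0_le_iff divide_nonneg_nonneg)
qed

lemma exists_energy_params:
  assumes "\<beta> > 0" "K \<ge> 1" "c > 0"
  shows "\<exists>\<gamma>>0. \<exists>T>0. \<gamma> * K / 4 + c / (4 * \<gamma> * real T) \<le> \<beta>"
proof -
  define \<gamma> where "\<gamma> = 2 * \<beta> / K"
  define T where "T = nat \<lceil>c / (2 * \<gamma> * \<beta>)\<rceil> + 1"
  have g: "\<gamma> > 0" using assms by (simp add: \<gamma>_def)
  have "c / (2 * \<gamma> * \<beta>) \<le> real T"
    using real_nat_ceiling_ge[of "c / (2 * \<gamma> * \<beta>)"] by (simp add: T_def)
  then have "c \<le> \<beta> / 2 * (4 * \<gamma> * real T)"
    using g assms(1) by (simp add: pos_divide_le_eq algebra_simps)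
  moreover have "4 * \<gamma> * real T > 0" using g by (simp add: T_def)
  ultimately have "c / (4 * \<gamma> * real T) \<le> \<beta> / 2"
    by (simp add: pos_divide_le_eq)
  moreover have "\<gamma> * K / 4 = \<beta> / 2" using assms by (simp add: \<gamma>_def)
  ultimately have "\<gamma> * K / 4 + c / (4 * \<gamma> * real T) \<le> \<beta>" by linarith
  moreover have "T > 0" by (simp add: T_def)
  ultimately show ?thesis using g by blast
qed

lemma exists_params_small_sym_defect:
  assumes "\<epsilon> > 0" and "k \<ge> 1"
  shows "\<exists>\<delta>>0. \<exists>\<eta>>0. \<forall>n (\<mu> :: (nat \<Rightarrow> 'a::finite) \<Rightarrow> real).
    is_prob n \<mu> \<and> real n > 1 / \<eta> \<and> heavy_states_close n \<mu> \<delta> \<eta> k \<longrightarrow> sym_defect n \<mu> k (cube n) < \<epsilon>"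
proof -
  have k: "real k > 0" using assms(2) by simp
  define c where "c = real (card (UNIV::'a set))"
  have c: "c \<ge> 1" unfolding c_def using card_gt_0_iff[of "UNIV::'a set"] by simp
  have "(1::real) = (\<Sum>j\<in>{0}. c ^ j)" by simp
  also have "\<dots> \<le> (\<Sum>j<k. c ^ j)" using assms(2) c by (intro sum_mono2) auto
  finally have K: "geom_sum (card (UNIV::'a set)) k \<ge> 1" by (simp add: geom_sum_def c_def)
  define \<delta> where "\<delta> = \<epsilon> / (4 * real k)"
  define A where "A = 1 + 2 * real k / \<delta>"
  have d: "\<delta> > 0" using assms(1) k by (simp add: \<delta>_def)
  then have A: "A > 0" using k by (simp add: A_def add_pos_nonneg)
  obtain \<gamma> T where g: "\<gamma> > 0" and T: "T > 0"
    and params: "\<gamma> * geom_sum (card (UNIV::'a set)) k / 4 + real k / (4 * \<gamma> * real T) \<le> \<epsilon> / (4 * A)"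
    using exists_energy_params[OF _ K k, of "\<epsilon> / (4 * A)"] assms(1) A by auto
  define \<eta> where "\<eta> = \<epsilon> / (8 * real k * c ^ T)"
  have e: "\<eta> > 0" using assms(1) k c by (simp add: \<eta>_def)
  have "sym_defect n \<mu> k (cube n) < \<epsilon>"
    if P: "is_prob n \<mu>" and n: "real n > 1 / \<eta>" and hyp: "heavy_states_close n \<mu> \<delta> \<eta> k"
    for n and \<mu> :: "(nat \<Rightarrow> 'a) \<Rightarrow> real"
  proof -
    have "n > 0" using n e by (metis of_nat_0 not_less_iff_gr_or_eq zero_less_divide_1_iff gr0I)
    have "sym_defect n \<mu> k (cube n)
        \<le> A * (\<gamma> * geom_sum (card (UNIV::'a set)) k / 4 + real k / (4 * \<gamma> * real T))
          + real k * \<delta> + 2 * real k * c ^ T * \<eta>"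
      using sym_defect_cube_le_params[OF P \<open>n > 0\<close> d e g T hyp] by (simp add: A_def c_def)
    also have "\<dots> \<le> A * (\<epsilon> / (4 * A)) + real k * \<delta> + 2 * real k * c ^ T * \<eta>"
      using params A by (simp only: add_right_mono mult_left_mono less_imp_le)
    also have "\<dots> = 3 * \<epsilon> / 4"
      using A k c by (simp add: \<delta>_def \<eta>_def)
    finally show ?thesis using assms(1) by simp
  qed
  then show ?thesis using d e by blast
qed

theorem corollary2p3:
  fixes \<epsilon> :: real and k :: nat
  assumes "\<epsilon> > 0" and "k \<ge> 2"
  shows "\<exists>\<delta>>0. \<exists>\<eta>>0. \<forall>n::nat. real n > 1 / \<eta> \<longrightarrow>
    (\<forall>\<mu> :: (nat \<Rightarrow> 'a::finite) \<Rightarrow> real. is_prob n \<mu> \<longrightarrow>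
      (\<forall>S1 S2. is_state n \<mu> \<delta> k S1 \<and> is_state n \<mu> \<delta> k S2 \<and>
               msr \<mu> S1 \<ge> \<eta> \<and> msr \<mu> S2 \<ge> \<eta> \<longrightarrow>
         (1 / real n) * (\<Sum>x<n. tv1 (marg1 \<mu> S1 x) (marg1 \<mu> S2 x)) < \<delta>) \<longrightarrow>
      is_symmetric n \<mu> \<epsilon> k)"
proof -
  obtain \<delta> \<eta> where d: "\<delta> > 0" and e: "\<eta> > 0"
    and small: "\<And>n (\<mu> :: (nat \<Rightarrow> 'a) \<Rightarrow> real). is_prob n \<mu> \<Longrightarrow> real n > 1 / \<eta> \<Longrightarrow> heavy_states_close n \<mu> \<delta> \<eta> k
      \<Longrightarrow> sym_defect n \<mu> k (cube n) < \<epsilon>"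
    using exists_params_small_sym_defect[OF assms(1), of k] assms(2) by fastforce
  show ?thesis
    unfolding is_symmetric_def
  proof (rule exI[of _ \<delta>], intro conjI d, rule exI[of _ \<eta>], intro conjI e allI impI)
    fix n and \<mu> :: "(nat \<Rightarrow> 'a) \<Rightarrow> real"
    assume n: "real n > 1 / \<eta>" and P: "is_prob n \<mu>"
      and "\<forall>S1 S2. is_state n \<mu> \<delta> k S1 \<and> is_state n \<mu> \<delta> k S2 \<and> msr \<mu> S1 \<ge> \<eta> \<and> msr \<mu> S2 \<ge> \<eta> \<longrightarrow>
        (1 / real n) * (\<Sum>x<n. tv1 (marg1 \<mu> S1 x) (marg1 \<mu> S2 x)) < \<delta>"
    then have "heavy_states_close n \<mu> \<delta> \<eta> k"
      unfolding heavy_states_close_def marg_dist_def by blast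
    then show "is_state n \<mu> \<epsilon> k (cube n)"
      using small[OF P n] msr_cube[OF P] by (simp add: is_state_iff_sym_defect)
  qed
qed

end
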